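(* Satisfiability and finite satisfiability of $\mathrm{LTL}(\sim)$ are logspace-reducible to $\mathbf{\Delta^3_0}$.
   Context: Let $\mathrm{AP}$ be a countably infinite set of atomic propositions. A trace is an infinite sequence $t=t(0)t(1)\cdots\in(\wp\mathrm{AP})^\omega$, and $t^i=t(i)t(i+1)\cdots$. A team is a (possibly empty) set $T$ of traces, and $T^i=\{t^i: t\in T\}$. Formulas of $\mathrm{LTL}(\sim)$ are given by $\varphi::=p\mid\neg\varphi\mid\varphi\wedge\varphi\mid\varphi\vee\varphi\mid\mathsf X\varphi\mid\mathsf F\varphi\mid\mathsf G\varphi\mid\varphi\,\mathsf U\,\varphi\mid\varphi\,\mathsf R\,\varphi\mid{\sim}\varphi$ with $p\in\mathrm{AP}$. Synchronous team semantics: $T\models p$ iff $p\in t(0)$ for all $t\in T$; $T\models\neg\varphi$ iff $\{t\}\not\models\varphi$ for all $t\in T$; $T\models\varphi\wedge\psi$ iff $T\models\varphi$ and $T\models\psi$; $T\models\varphi\vee\psi$ iff $T=S\cup U$ for some $S,U$ with $S\models\varphi$ and $U\models\psi$; $T\models\mathsf X\varphi$ iff $T^1\models\varphi$; $T\models\mathsf F\varphi$ iff $T^k\models\varphi$ for some $k\ge0$; $T\models\mathsf G\varphi$ iff $T^k\models\varphi$ for all $k\ge0$; $T\models\varphi\,\mathsf U\,\psi$ iff there is $k\ge0$ with $T^k\models\psi$ and $T^j\models\varphi$ for all $j<k$; $T\models\varphi\,\mathsf R\,\psi$ iff for all $k\ge0$, $T^k\models\psi$ or $T^j\models\varphi$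 for some $j<k$; $T\models{\sim}\varphi$ iff $T\not\models\varphi$. A finite Kripke structure is $K=(W,R,\eta,r)$ with $W$ finite nonempty, $R\subseteq W\times W$ serial, $\eta:W\to\wp\mathrm{AP}$ with finite labels, and root $r\in W$; a path is $\pi\in W^\omega$ with $\pi(0)=r$ and $(\pi(i),\pi(i+1))\in R$; it induces the trace $(\eta(\pi(i)))_{i\ge0}$; $T(K)$ is the team of all induced traces. Satisfiability: the set of formulas satisfied by some team. Finite satisfiability: the set of formulas satisfied by $T(K)$ for some finite Kripke structure $K$. $\mathbf{\Delta^3_0}$ denotes the set of closed formulas of third-order arithmetic (vocabulary $+,\times,0,1,=,\le$; first-order variables range over $\mathbb N$, second-order variables of arity $n$ over subsets of $\mathbb N^n$, third-order variables of type $(n_1,\dots,n_k)$ over subsets of $\wp(\mathbb N^{n_1})\times\cdots\times\wp(\mathbb N^{n_k})$, with atoms $\mathfrak a(A_1,\dots,A_k)$) that are true in the standard model $\mathbb N$. *)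

theory Defs
  imports Complex_Main
begin

section \<open>LTL with Boolean negation (~) under synchronous team semantics\<close>

datatype ltl =
    Prop nat
  | Neg ltl
  | Conj ltl ltl
  | Disj ltl ltl
  | Next ltl
  | Fut ltl
  | Glob ltl
  | Until ltl ltl
  | Rel ltl ltl
  | BNeg ltl   (* the Boolean negation ~ *)

type_synonym trace = "nat \<Rightarrow> nat set"

definition suffix :: "nat \<Rightarrow> trace \<Rightarrow> trace" where
  "suffix i t = (\<lambda>j. t (i + j))"

definition tsuffix :: "nat \<Rightarrow> trace set \<Rightarrow> trace set" where
  "tsuffix i T = suffix i ` T"

primrec tsat :: "trace set \<Rightarrow> ltl \<Rightarrow> bool" where
  "tsat T (Prop p) = (\<forall>t\<in>T. p \<in> t 0)"
| "tsat T (Neg \<phi>) = (\<forall>t\<in>T. \<not> tsat {t} \<phi>)"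
| "tsat T (Conj \<phi> \<psi>) = (tsat T \<phi> \<and> tsat T \<psi>)"
| "tsat T (Disj \<phi> \<psi>) = (\<exists>S U. T = S \<union> U \<and> tsat S \<phi> \<and> tsat U \<psi>)"
| "tsat T (Next \<phi>) = tsat (tsuffix 1 T) \<phi>"
| "tsat T (Fut \<phi>) = (\<exists>k. tsat (tsuffix k T) \<phi>)"
| "tsat T (Glob \<phi>) = (\<forall>k. tsat (tsuffix k T) \<phi>)"
| "tsat T (Until \<phi> \<psi>) = (\<exists>k. tsat (tsuffix k T) \<psi> \<and> (\<forall>j<k. tsat (tsuffix j T) \<phi>))"
| "tsat T (Rel \<phi> \<psi>) = (\<forall>k. tsat (tsuffix k T) \<psi> \<or> (\<exists>j<k. tsat (tsuffix j T) \<phi>))"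
| "tsat T (BNeg \<phi>) = (\<not> tsat T \<phi>)"

text \<open>Finite Kripke structures (worlds taken from nat; every finite structure is
  isomorphic to one of this form).\<close>

definition finite_kripke :: "nat set \<Rightarrow> (nat \<times> nat) set \<Rightarrow> (nat \<Rightarrow> nat set) \<Rightarrow> nat \<Rightarrow> bool" where
  "finite_kripke W R \<eta> r \<longleftrightarrow>
     finite W \<and> W \<noteq> {} \<and> R \<subseteq> W \<times> W \<and> (\<forall>w\<in>W. \<exists>v. (w, v) \<in> R)
     \<and> (\<forall>w\<in>W. finite (\<eta> w)) \<and> r \<in> W"

definition kripke_team :: "(nat \<times> nat) set \<Rightarrow> (nat \<Rightarrow> nat set) \<Rightarrow> nat \<Rightarrow> trace set" where
  "kripke_team R \<eta> r =
     {(\<lambda>i. \<eta> (\<pi> i)) | \<pi>. \<pi> 0 = r \<and> (\<forall>i. (\<pi> i, \<pi> (Suc i)) \<in> R)}"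

definition LTL_SAT :: "ltl set" where
  "LTL_SAT = {\<phi>. \<exists>T. tsat T \<phi>}"

definition LTL_FINSAT :: "ltl set" where
  "LTL_FINSAT = {\<phi>. \<exists>W R \<eta> r. finite_kripke W R \<eta> r \<and> tsat (kripke_team R \<eta> r) \<phi>}"

section \<open>Third-order arithmetic\<close>

datatype aterm = TVar nat | TZero | TOne | TPlus aterm aterm | TTimes aterm aterm

text \<open>Second-order variables are identified by (name, arity); third-order variables
  by (name, type (n1,...,nk)).\<close>

datatype aform =
    AEq aterm aterm
  | ALe aterm aterm
  | AMem2 nat nat "aterm list"
  | AMem3 nat "nat list" "(nat \<times> nat) list"
  | ANot aform
  | AAnd aform aform
  | AOr aform aform
  | AEx1 nat aform
  | AAll1 nat aform
  | AEx2 nat nat aform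
  | AAll2 nat nat aform
  | AEx3 nat "nat list" aform
  | AAll3 nat "nat list" aform

record asg =
  v1 :: "nat \<Rightarrow> nat"
  v2 :: "nat \<Rightarrow> nat \<Rightarrow> nat list set"
  v3 :: "nat \<Rightarrow> nat list \<Rightarrow> nat list set list set"

definition dom2 :: "nat \<Rightarrow> nat list set set" where
  "dom2 n = {A. \<forall>xs\<in>A. length xs = n}"

definition dom3 :: "nat list \<Rightarrow> nat list set list set set" where
  "dom3 ns = {\<AA>. \<forall>As\<in>\<AA>. length As = length ns \<and> (\<forall>i<length ns. As ! i \<in> dom2 (ns ! i))}"

primrec evalt :: "asg \<Rightarrow> aterm \<Rightarrow> nat" where
  "evalt \<sigma> (TVar x) = v1 \<sigma> x"
| "evalt \<sigma> TZero = 0"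
| "evalt \<sigma> TOne = 1"
| "evalt \<sigma> (TPlus s t) = evalt \<sigma> s + evalt \<sigma> t"
| "evalt \<sigma> (TTimes s t) = evalt \<sigma> s * evalt \<sigma> t"

primrec asat :: "asg \<Rightarrow> aform \<Rightarrow> bool" where
  "asat \<sigma> (AEq s t) = (evalt \<sigma> s = evalt \<sigma> t)"
| "asat \<sigma> (ALe s t) = (evalt \<sigma> s \<le> evalt \<sigma> t)"
| "asat \<sigma> (AMem2 X n ts) = (length ts = n \<and> map (evalt \<sigma>) ts \<in> v2 \<sigma> X n)"
| "asat \<sigma> (AMem3 a ns Xs) = (map snd Xs = ns \<and> map (\<lambda>(X, m). v2 \<sigma> X m) Xs \<in> v3 \<sigma> a ns)"
| "asat \<sigma> (ANot \<phi>) = (\<not> asat \<sigma> \<phi>)"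
| "asat \<sigma> (AAnd \<phi> \<psi>) = (asat \<sigma> \<phi> \<and> asat \<sigma> \<psi>)"
| "asat \<sigma> (AOr \<phi> \<psi>) = (asat \<sigma> \<phi> \<or> asat \<sigma> \<psi>)"
| "asat \<sigma> (AEx1 x \<phi>) = (\<exists>k. asat (\<sigma>\<lparr>v1 := (v1 \<sigma>)(x := k)\<rparr>) \<phi>)"
| "asat \<sigma> (AAll1 x \<phi>) = (\<forall>k. asat (\<sigma>\<lparr>v1 := (v1 \<sigma>)(x := k)\<rparr>) \<phi>)"
| "asat \<sigma> (AEx2 X n \<phi>) =
     (\<exists>A\<in>dom2 n. asat (\<sigma>\<lparr>v2 := (v2 \<sigma>)(X := (v2 \<sigma> X)(n := A))\<rparr>) \<phi>)"
| "asat \<sigma> (AAll2 X n \<phi>) =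
     (\<forall>A\<in>dom2 n. asat (\<sigma>\<lparr>v2 := (v2 \<sigma>)(X := (v2 \<sigma> X)(n := A))\<rparr>) \<phi>)"
| "asat \<sigma> (AEx3 a ns \<phi>) =
     (\<exists>\<AA>\<in>dom3 ns. asat (\<sigma>\<lparr>v3 := (v3 \<sigma>)(a := (v3 \<sigma> a)(ns := \<AA>))\<rparr>) \<phi>)"
| "asat \<sigma> (AAll3 a ns \<phi>) =
     (\<forall>\<AA>\<in>dom3 ns. asat (\<sigma>\<lparr>v3 := (v3 \<sigma>)(a := (v3 \<sigma> a)(ns := \<AA>))\<rparr>) \<phi>)"

primrec tfv :: "aterm \<Rightarrow> nat set" where
  "tfv (TVar x) = {x}"
| "tfv TZero = {}"
| "tfv TOne = {}"
| "tfv (TPlus s t) = tfv s \<union> tfv t"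
| "tfv (TTimes s t) = tfv s \<union> tfv t"

primrec fv1 :: "aform \<Rightarrow> nat set" where
  "fv1 (AEq s t) = tfv s \<union> tfv t"
| "fv1 (ALe s t) = tfv s \<union> tfv t"
| "fv1 (AMem2 X n ts) = \<Union> (set (map tfv ts))"
| "fv1 (AMem3 a ns Xs) = {}"
| "fv1 (ANot \<phi>) = fv1 \<phi>"
| "fv1 (AAnd \<phi> \<psi>) = fv1 \<phi> \<union> fv1 \<psi>"
| "fv1 (AOr \<phi> \<psi>) = fv1 \<phi> \<union> fv1 \<psi>"
| "fv1 (AEx1 x \<phi>) = fv1 \<phi> - {x}"
| "fv1 (AAll1 x \<phi>) = fv1 \<phi> - {x}"
| "fv1 (AEx2 X n \<phi>) = fv1 \<phi>"
| "fv1 (AAll2 X n \<phi>) = fv1 \<phi>"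
| "fv1 (AEx3 a ns \<phi>) = fv1 \<phi>"
| "fv1 (AAll3 a ns \<phi>) = fv1 \<phi>"

primrec fv2 :: "aform \<Rightarrow> (nat \<times> nat) set" where
  "fv2 (AEq s t) = {}"
| "fv2 (ALe s t) = {}"
| "fv2 (AMem2 X n ts) = {(X, n)}"
| "fv2 (AMem3 a ns Xs) = set Xs"
| "fv2 (ANot \<phi>) = fv2 \<phi>"
| "fv2 (AAnd \<phi> \<psi>) = fv2 \<phi> \<union> fv2 \<psi>"
| "fv2 (AOr \<phi> \<psi>) = fv2 \<phi> \<union> fv2 \<psi>"
| "fv2 (AEx1 x \<phi>) = fv2 \<phi>"
| "fv2 (AAll1 x \<phi>) = fv2 \<phi>"
| "fv2 (AEx2 X n \<phi>) = fv2 \<phi> - {(X, n)}"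
| "fv2 (AAll2 X n \<phi>) = fv2 \<phi> - {(X, n)}"
| "fv2 (AEx3 a ns \<phi>) = fv2 \<phi>"
| "fv2 (AAll3 a ns \<phi>) = fv2 \<phi>"

primrec fv3 :: "aform \<Rightarrow> (nat \<times> nat list) set" where
  "fv3 (AEq s t) = {}"
| "fv3 (ALe s t) = {}"
| "fv3 (AMem2 X n ts) = {}"
| "fv3 (AMem3 a ns Xs) = {(a, ns)}"
| "fv3 (ANot \<phi>) = fv3 \<phi>"
| "fv3 (AAnd \<phi> \<psi>) = fv3 \<phi> \<union> fv3 \<psi>"
| "fv3 (AOr \<phi> \<psi>) = fv3 \<phi> \<union> fv3 \<psi>"
| "fv3 (AEx1 x \<phi>) = fv3 \<phi>"
| "fv3 (AAll1 x \<phi>) = fv3 \<phi>"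
| "fv3 (AEx2 X n \<phi>) = fv3 \<phi>"
| "fv3 (AAll2 X n \<phi>) = fv3 \<phi>"
| "fv3 (AEx3 a ns \<phi>) = fv3 \<phi> - {(a, ns)}"
| "fv3 (AAll3 a ns \<phi>) = fv3 \<phi> - {(a, ns)}"

definition closed :: "aform \<Rightarrow> bool" where
  "closed \<phi> \<longleftrightarrow> fv1 \<phi> = {} \<and> fv2 \<phi> = {} \<and> fv3 \<phi> = {}"

text \<open>A (well-typed) default assignment; truth of closed formulas does not depend on it.\<close>
definition asg0 :: asg where
  "asg0 = \<lparr>v1 = (\<lambda>_. 0), v2 = (\<lambda>_ _. {}), v3 = (\<lambda>_ _. {})\<rparr>"

definition Delta30 :: "aform set" where
  "Delta30 = {\<phi>. closed \<phi> \<and> asat asg0 \<phi>}"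

section \<open>Binary encodings of formulas\<close>

fun bin :: "nat \<Rightarrow> bool list" where
  "bin n = (if n < 2 then [n = 1] else bin (n div 2) @ [odd n])"

definition tok :: "nat \<Rightarrow> bool list" where
  "tok n = [odd (n div 8), odd (n div 4), odd (n div 2), odd n]"

definition num :: "nat \<Rightarrow> bool list" where
  "num n = concat (map (\<lambda>b. tok (if b then 1 else 0)) (bin n)) @ tok 15"

definition enc_list :: "('a \<Rightarrow> bool list) \<Rightarrow> 'a list \<Rightarrow> bool list" where
  "enc_list f xs = num (length xs) @ concat (map f xs)"

primrec enc_ltl :: "ltl \<Rightarrow> bool list" where
  "enc_ltl (Prop p) = tok 2 @ num p"
| "enc_ltl (Neg \<phi>) = tok 3 @ enc_ltl \<phi>"
| "enc_ltl (Conj \<phi> \<psi>) = tok 4 @ enc_ltl \<phi> @ enc_ltl \<psi>"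
| "enc_ltl (Disj \<phi> \<psi>) = tok 5 @ enc_ltl \<phi> @ enc_ltl \<psi>"
| "enc_ltl (Next \<phi>) = tok 6 @ enc_ltl \<phi>"
| "enc_ltl (Fut \<phi>) = tok 7 @ enc_ltl \<phi>"
| "enc_ltl (Glob \<phi>) = tok 8 @ enc_ltl \<phi>"
| "enc_ltl (Until \<phi> \<psi>) = tok 9 @ enc_ltl \<phi> @ enc_ltl \<psi>"
| "enc_ltl (Rel \<phi> \<psi>) = tok 10 @ enc_ltl \<phi> @ enc_ltl \<psi>"
| "enc_ltl (BNeg \<phi>) = tok 11 @ enc_ltl \<phi>"

primrec enc_term :: "aterm \<Rightarrow> bool list" where
  "enc_term (TVar x) = tok 2 @ num x"
| "enc_term TZero = tok 3"
| "enc_term TOne = tok 4"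
| "enc_term (TPlus s t) = tok 5 @ enc_term s @ enc_term t"
| "enc_term (TTimes s t) = tok 6 @ enc_term s @ enc_term t"

primrec enc_aform :: "aform \<Rightarrow> bool list" where
  "enc_aform (AEq s t) = tok 2 @ enc_term s @ enc_term t"
| "enc_aform (ALe s t) = tok 3 @ enc_term s @ enc_term t"
| "enc_aform (AMem2 X n ts) = tok 4 @ num X @ num n @ num (length ts) @ concat (map enc_term ts)"
| "enc_aform (AMem3 a ns Xs) =
     tok 5 @ num a @ enc_list num ns @ enc_list (\<lambda>(X, m). num X @ num m) Xs"
| "enc_aform (ANot \<phi>) = tok 6 @ enc_aform \<phi>"
| "enc_aform (AAnd \<phi> \<psi>) = tok 7 @ enc_aform \<phi> @ enc_aform \<psi>"
| "enc_aform (AOr \<phi> \<psi>) = tok 8 @ enc_aform \<phi> @ enc_aform \<psi>"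
| "enc_aform (AEx1 x \<phi>) = tok 9 @ num x @ enc_aform \<phi>"
| "enc_aform (AAll1 x \<phi>) = tok 10 @ num x @ enc_aform \<phi>"
| "enc_aform (AEx2 X n \<phi>) = tok 11 @ num X @ num n @ enc_aform \<phi>"
| "enc_aform (AAll2 X n \<phi>) = tok 12 @ num X @ num n @ enc_aform \<phi>"
| "enc_aform (AEx3 a ns \<phi>) = tok 13 @ num a @ enc_list num ns @ enc_aform \<phi>"
| "enc_aform (AAll3 a ns \<phi>) = tok 14 @ num a @ enc_list num ns @ enc_aform \<phi>"

section \<open>Logspace transducers and logspace reductions\<close>

text \<open>Deterministic Turing transducer: two-way read-only input tape with end markers
  (position 0 and length+1), k one-way-infinite work tapes over alphabet 0..<nsyms
  (0 = blank), and a write-only one-way output tape over bool.\<close>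

record tm =
  nstates :: nat
  nsyms :: nat
  ntapes :: nat
  delta :: "nat \<Rightarrow> bool option \<Rightarrow> nat list \<Rightarrow> nat \<times> int \<times> (nat \<times> int) list \<times> bool option"
  start :: nat
  halt :: nat

record conf =
  st :: nat
  ipos :: nat
  wt :: "(nat \<Rightarrow> nat) list"
  wpos :: "nat list"
  outp :: "bool list"

definition wf_tm :: "tm \<Rightarrow> bool" where
  "wf_tm M \<longleftrightarrow> start M < nstates M \<and> halt M < nstates M \<and> 0 < nsyms M \<and>
     (\<forall>q a ss. q < nstates M \<and> q \<noteq> halt M \<and> length ss = ntapes M \<and> (\<forall>s\<in>set ss. s < nsyms M) \<longrightarrow>
        (case delta M q a ss of (q', di, ws, ob) \<Rightarrow>
           q' < nstates M \<and> di \<in> {-1, 0, 1} \<and> length ws = ntapes M \<and>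
           (\<forall>(s, d)\<in>set ws. s < nsyms M \<and> d \<in> {-1, 0, 1})))"

definition inp_sym :: "bool list \<Rightarrow> nat \<Rightarrow> bool option" where
  "inp_sym x i = (if 1 \<le> i \<and> i \<le> length x then Some (x ! (i - 1)) else None)"

definition init_conf :: "tm \<Rightarrow> conf" where
  "init_conf M = \<lparr>st = start M, ipos = 0, wt = replicate (ntapes M) (\<lambda>_. 0),
                  wpos = replicate (ntapes M) 0, outp = []\<rparr>"

definition step :: "tm \<Rightarrow> bool list \<Rightarrow> conf \<Rightarrow> conf" where
  "step M x c =
    (if st c = halt M then c else
     (case delta M (st c) (inp_sym x (ipos c)) (map2 (\<lambda>t p. t p) (wt c) (wpos c)) of
       (q', di, ws, ob) \<Rightarrow>
         \<lparr>st = q',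
          ipos = min (length x + 1) (nat (int (ipos c) + di)),
          wt = map2 (\<lambda>(t, p) (s, d). t(p := s)) (zip (wt c) (wpos c)) ws,
          wpos = map2 (\<lambda>p (s, d). nat (int p + d)) (wpos c) ws,
          outp = outp c @ (case ob of None \<Rightarrow> [] | Some b \<Rightarrow> [b])\<rparr>))"

definition run :: "tm \<Rightarrow> bool list \<Rightarrow> nat \<Rightarrow> conf" where
  "run M x n = (step M x ^^ n) (init_conf M)"

definition logspace_computes :: "tm \<Rightarrow> (bool list \<Rightarrow> bool list) \<Rightarrow> bool" where
  "logspace_computes M f \<longleftrightarrow>
     (\<exists>c::nat. \<forall>x.
        (\<exists>n. st (run M x n) = halt M \<and> outp (run M x n) = f x) \<and>
        (\<forall>m. \<forall>p\<in>set (wpos (run M x m)). real p \<le> real c * log 2 (real (length x) + 2)))"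

definition logspace_reducible :: "bool list set \<Rightarrow> bool list set \<Rightarrow> bool" where
  "logspace_reducible A B \<longleftrightarrow>
     (\<exists>M f. wf_tm M \<and> logspace_computes M f \<and> (\<forall>x. x \<in> A \<longleftrightarrow> f x \<in> B))"

end

theory Submission
  imports Defs
begin

text \<open>A trace t is coded by the binary relation {(i, p) | p \<in> t i} and a team by the set of the
  codes of its traces, an object of third-order type [2]. Under this coding every connective of
  LTL(~) becomes quantification over teams, traces and time offsets: disjunction splits the team
  into a union of two subteams, Neg quantifies over the singleton subteams, the temporal operators
  quantify over time offsets and the correspondingly shifted teams, and ~ is plain negation. Hence
  \<phi> is satisfiable iff the sentence "some team satisfies the translation of \<phi>" is true,
  and finitely satisfiable iff there is such a team that is moreover the team of a finite Kripke
  structure, which is definable as well.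

  The translation is compositional in Polish notation: each input token is replaced by a fixed block
  of output, and the index of an atomic proposition is rebuilt bit by bit. It is therefore computed
  by a finite-state transducer, which a Turing machine runs without any work tape. The output of the
  transducer can be parsed back, so inputs that do not encode a formula are mapped to strings that do
  not encode a true sentence.\<close>

section \<open>Prefix codes\<close>

declare bin.simps[simp del]

lemma tok_numerals:
  "tok 0 = [False,False,False,False]" "tok 1 = [False,False,False,True]"
  "tok 2 = [False,False,True,False]" "tok 3 = [False,False,True,True]"
  "tok 4 = [False,True,False,False]" "tok 5 = [False,True,False,True]"
  "tok 6 = [False,True,True,False]" "tok 7 = [False,True,True,True]"
  "tok 8 = [True,False,False,False]" "tok 9 = [True,False,False,True]"
  "tok 10 = [True,False,True,False]" "tok 11 = [True,False,True,True]"
  "tok 12 = [True,True,False,False]" "tok 13 = [True,True,False,True]"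
  "tok 14 = [True,True,True,False]" "tok 15 = [True,True,True,True]"
  by (simp_all add: tok_def)

lemma length_tok[simp]: "length (tok k) = 4"
  by (simp add: tok_def)

lemma tok_ne_Nil[simp]: "tok k \<noteq> []"
  by (simp add: tok_def)

lemma take_tok_append[simp]: "take 4 (tok k @ x) = tok k"
  by (simp add: tok_def)

lemma drop_tok_append[simp]: "drop 4 (tok k @ x) = x"
  by (simp add: tok_def)

lemma num_eq_digits: "num n = concat (map (\<lambda>b. tok (of_bool b)) (bin n)) @ tok 15"
  by (simp add: num_def of_bool_def)

definition bin_val_from :: "nat \<Rightarrow> bool list \<Rightarrow> nat" where
  "bin_val_from = foldl (\<lambda>m b. 2 * m + of_bool b)"

abbreviation bin_val :: "bool list \<Rightarrow> nat" where
  "bin_val \<equiv> bin_val_from 0"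

lemma bin_val_from_snoc[simp]: "bin_val_from m (bs @ [b]) = 2 * bin_val_from m bs + of_bool b"
  by (simp add: bin_val_from_def)

lemma bin_val_bin[simp]: "bin_val (bin n) = n"
proof (induction n rule: bin.induct)
  case (1 n)
  show ?case
  proof (cases "n < 2")
    case True
    then show ?thesis by (subst bin.simps) (auto simp: bin_val_from_def)
  next
    case False
    then have "bin n = bin (n div 2) @ [odd n]" by (subst bin.simps) simp
    with 1 False show ?thesis by simp
  qed
qed

lemma inj_bin: "inj bin"
  by (metis bin_val_bin injI)

lemma bin_val_tok: "k < 16 \<Longrightarrow> bin_val (tok k) = k"
proof -
  assume "k < 16"
  then have "k = 0 \<or> k = 1 \<or> k = 2 \<or> k = 3 \<or> k = 4 \<or> k = 5 \<or> k = 6 \<or> k = 7 \<or> k = 8 \<or>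
      k = 9 \<or> k = 10 \<or> k = 11 \<or> k = 12 \<or> k = 13 \<or> k = 14 \<or> k = 15"
    by presburger
  then show ?thesis by (elim disjE) (simp_all add: bin_val_from_def tok_def)
qed

lemma tok_bin_val: "length bs = 4 \<Longrightarrow> tok (bin_val bs) = bs \<and> bin_val bs < 16"
proof -
  assume "length bs = 4"
  then obtain a b c d where "bs = [a, b, c, d]"
    by (auto simp: numeral_eq_Suc length_Suc_conv)
  then show ?thesis
    by (cases a; cases b; cases c; cases d) (simp_all add: tok_def bin_val_from_def)
qed

definition prefix_code :: "('a \<Rightarrow> bool list) \<Rightarrow> bool" where
  "prefix_code f \<longleftrightarrow> (\<forall>a b r r'. f a @ r = f b @ r' \<longleftrightarrow> a = b \<and> r = r')"

lemma prefix_code_iffs: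
  assumes "prefix_code f"
  shows "f a @ r = f b @ r' \<longleftrightarrow> a = b \<and> r = r'" "f a @ r = f b \<longleftrightarrow> a = b \<and> r = []"
    "f a = f b @ r \<longleftrightarrow> a = b \<and> r = []" "f a = f b \<longleftrightarrow> a = b"
proof -
  have cancel: "f a @ r = f b @ r' \<longleftrightarrow> a = b \<and> r = r'" for a b r r'
    using assms by (simp add: prefix_code_def)
  show "f a @ r = f b @ r' \<longleftrightarrow> a = b \<and> r = r'" "f a @ r = f b \<longleftrightarrow> a = b \<and> r = []"
    "f a = f b @ r \<longleftrightarrow> a = b \<and> r = []" "f a = f b \<longleftrightarrow> a = b"
    using cancel[of a r b r'] cancel[of a r b "[]"] cancel[of a "[]" b r] cancel[of a "[]" b "[]"] by auto
qed

lemma prefix_code_num: "prefix_code num"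
proof -
  have digits: "concat (map (\<lambda>b. tok (of_bool b)) bs) @ tok 15 @ r =
      concat (map (\<lambda>b. tok (of_bool b)) cs) @ tok 15 @ r' \<longleftrightarrow> bs = cs \<and> r = r'" for bs cs r r'
    by (induction bs arbitrary: cs) (case_tac cs; auto simp: tok_def)+
  show ?thesis
    unfolding prefix_code_def num_eq_digits using digits inj_bin by (auto dest: injD)
qed

lemmas num_append_iffs[simp] = prefix_code_iffs[OF prefix_code_num]

lemma prefix_code_concat:
  assumes "prefix_code f" "length xs = length ys"
  shows "concat (map f xs) @ r = concat (map f ys) @ r' \<longleftrightarrow> xs = ys \<and> r = r'"
  using assms(2)
proof (induction xs arbitrary: ys)
  case (Cons x xs)
  then show ?case
    using assms(1) by (cases ys) (auto simp: prefix_code_def)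
qed simp

lemma prefix_code_enc_list:
  assumes "prefix_code f"
  shows "prefix_code (enc_list f)"
  unfolding prefix_code_def
proof (intro allI)
  fix xs ys r r'
  show "enc_list f xs @ r = enc_list f ys @ r' \<longleftrightarrow> xs = ys \<and> r = r'"
  proof (cases "length xs = length ys")
    case True
    then show ?thesis using prefix_code_concat[OF assms True] by (simp add: enc_list_def)
  qed (auto simp: enc_list_def)
qed

lemma prefix_code_enc_term: "prefix_code enc_term"
proof -
  have "enc_term s @ r = enc_term t @ r' \<longleftrightarrow> s = t \<and> r = r'" for s t r r'
    by (induction s arbitrary: t r r') (case_tac t; auto simp: tok_numerals)+
  then show ?thesis by (simp add: prefix_code_def)
qed

lemmas enc_list_num_append_iffs[simp] = prefix_code_iffs[OF prefix_code_enc_list[OF prefix_code_num]]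

lemmas enc_term_append_iffs[simp] = prefix_code_iffs[OF prefix_code_enc_term]

lemma prefix_code_enc_aform: "prefix_code enc_aform"
proof -
  have "prefix_code (\<lambda>(X, m). num X @ num m)"
    by (auto simp: prefix_code_def)
  note prefix_code_iffs(1)[OF prefix_code_enc_list[OF this], simp]
  note prefix_code_concat[OF prefix_code_enc_term, simp]
  have "enc_aform s @ r = enc_aform t @ r' \<longleftrightarrow> s = t \<and> r = r'" for s t r r'
    by (induction s arbitrary: t r r') (case_tac t; auto simp: tok_numerals)+
  then show ?thesis by (simp add: prefix_code_def)
qed

lemmas enc_aform_append_iffs[simp] = prefix_code_iffs[OF prefix_code_enc_aform]

section \<open>The translation\<close>

definition aimp :: "aform \<Rightarrow> aform \<Rightarrow> aform" where
  "aimp a b = AOr (ANot a) b"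

definition aiff :: "aform \<Rightarrow> aform \<Rightarrow> aform" where
  "aiff a b = AAnd (aimp a b) (aimp b a)"

text \<open>Variable conventions: a team is a third-order variable of type [2], team variable 0 always
  holds the team at which the formula is evaluated; a trace is a binary relation (second-order
  variable of arity 2); first-order variables 0 and 1 hold time offsets, 2 and 3 are bound inside
  shifted, and 4 and 5 accumulate the index of an atomic proposition bit by bit.\<close>

definition in_team :: "nat \<Rightarrow> nat \<Rightarrow> aform" where
  "in_team a X = AMem3 a [2] [(X, 2)]"

definition team_eq :: "nat \<Rightarrow> nat \<Rightarrow> aform" where
  "team_eq a b = AAll2 0 2 (aiff (in_team a 0) (in_team b 0))"

definition team_union :: "nat \<Rightarrow> nat \<Rightarrow> nat \<Rightarrow> aform" where
  "team_union a b c = AAll2 0 2 (aiff (in_team a 0) (AOr (in_team b 0) (in_team c 0)))"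

definition shifted :: "nat \<Rightarrow> nat \<Rightarrow> aterm \<Rightarrow> aform" where
  "shifted X Y t =
     AAll1 2 (AAll1 3 (aiff (AMem2 X 2 [TVar 2, TVar 3]) (AMem2 Y 2 [TPlus (TVar 2) t, TVar 3])))"

definition team_suffix :: "nat \<Rightarrow> nat \<Rightarrow> aterm \<Rightarrow> aform" where
  "team_suffix a b t = AAll2 0 2 (aiff (in_team a 0) (AEx2 1 2 (AAnd (in_team b 1) (shifted 0 1 t))))"

definition team_singleton :: "nat \<Rightarrow> nat \<Rightarrow> aform" where
  "team_singleton a X = AAll2 1 2 (aiff (in_team a 1) (shifted 1 X TZero))"

definition rebind :: "nat \<Rightarrow> aform \<Rightarrow> aform" where
  "rebind k a = AEx3 0 [2] (AAnd (team_eq 0 k) a)"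

definition atom_var :: aform where
  "atom_var = AAll2 0 2 (aimp (in_team 0 0) (AMem2 0 2 [TZero, TVar 4]))"

definition bit_step :: "bool \<Rightarrow> aform" where
  "bit_step b = AEq (TVar 5) (TPlus (TPlus (TVar 4) (TVar 4)) (if b then TOne else TZero))"

primrec atom_bits :: "bool list \<Rightarrow> aform" where
  "atom_bits [] = atom_var"
| "atom_bits (b # bs) = AEx1 5 (AAnd (bit_step b) (AEx1 4 (AAnd (AEq (TVar 4) (TVar 5)) (atom_bits bs))))"

datatype uconn = UNeg | UNext | UFut | UGlob | UBNeg

datatype bconn = BConj | BDisj | BUntil | BRel

primrec uapp :: "uconn \<Rightarrow> ltl \<Rightarrow> ltl" where
  "uapp UNeg = Neg" | "uapp UNext = Next" | "uapp UFut = Fut" | "uapp UGlob = Glob" | "uapp UBNeg = BNeg"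

primrec bapp :: "bconn \<Rightarrow> ltl \<Rightarrow> ltl \<Rightarrow> ltl" where
  "bapp BConj = Conj" | "bapp BDisj = Disj" | "bapp BUntil = Until" | "bapp BRel = Rel"

primrec uarith :: "uconn \<Rightarrow> aform \<Rightarrow> aform" where
  "uarith UNeg a = AAll2 0 2 (aimp (in_team 0 0) (AEx3 0 [2] (AAnd (team_singleton 0 0) (ANot a))))"
| "uarith UNext a = AEx3 1 [2] (AAnd (team_suffix 1 0 TOne) (rebind 1 a))"
| "uarith UFut a = AEx1 0 (AEx3 1 [2] (AAnd (team_suffix 1 0 (TVar 0)) (rebind 1 a)))"
| "uarith UGlob a = AAll1 0 (AEx3 1 [2] (AAnd (team_suffix 1 0 (TVar 0)) (rebind 1 a)))"
| "uarith UBNeg a = ANot a"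

text \<open>The second argument of a binary connective is evaluated at the team held in team variable 2,
  but it is only moved into team variable 0 by a rebind 2 in front of that argument, not
  by the connective itself: in Polish notation a subformula is a second argument exactly when it
  starts right after a complete subformula, so a left-to-right transducer knows when to emit it.\<close>

primrec barith :: "bconn \<Rightarrow> aform \<Rightarrow> aform \<Rightarrow> aform" where
  "barith BConj a b = AEx3 2 [2] (AAnd (team_eq 2 0) (AAnd a b))"
| "barith BDisj a b = AEx3 1 [2] (AEx3 2 [2] (AAnd (team_union 0 1 2) (AAnd (rebind 1 a) b)))"
| "barith BUntil a b = AEx1 0 (AEx3 2 [2] (AAnd (team_suffix 2 0 (TVar 0))
     (AAnd (AAll1 1 (AOr (ALe (TVar 0) (TVar 1))
        (AEx3 1 [2] (AAnd (team_suffix 1 0 (TVar 1)) (rebind 1 a))))) b)))"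
| "barith BRel a b = AAll1 0 (AEx3 2 [2] (AAnd (team_suffix 2 0 (TVar 0))
     (AOr (AEx1 1 (AAnd (ANot (ALe (TVar 0) (TVar 1)))
        (AEx3 1 [2] (AAnd (team_suffix 1 0 (TVar 1)) (rebind 1 a))))) b)))"

primrec ltl_arith :: "ltl \<Rightarrow> aform" where
  "ltl_arith (Prop p) = AEx1 4 (AAnd (AEq (TVar 4) TZero) (atom_bits (bin p)))"
| "ltl_arith (Neg \<phi>) = uarith UNeg (ltl_arith \<phi>)"
| "ltl_arith (Conj \<phi> \<psi>) = barith BConj (ltl_arith \<phi>) (rebind 2 (ltl_arith \<psi>))"
| "ltl_arith (Disj \<phi> \<psi>) = barith BDisj (ltl_arith \<phi>) (rebind 2 (ltl_arith \<psi>))"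
| "ltl_arith (Next \<phi>) = uarith UNext (ltl_arith \<phi>)"
| "ltl_arith (Fut \<phi>) = uarith UFut (ltl_arith \<phi>)"
| "ltl_arith (Glob \<phi>) = uarith UGlob (ltl_arith \<phi>)"
| "ltl_arith (Until \<phi> \<psi>) = barith BUntil (ltl_arith \<phi>) (rebind 2 (ltl_arith \<psi>))"
| "ltl_arith (Rel \<phi> \<psi>) = barith BRel (ltl_arith \<phi>) (rebind 2 (ltl_arith \<psi>))"
| "ltl_arith (BNeg \<phi>) = uarith UBNeg (ltl_arith \<phi>)"

lemma ltl_arith_uapp: "ltl_arith (uapp c \<phi>) = uarith c (ltl_arith \<phi>)"
  by (cases c) simp_all

lemma ltl_arith_bapp: "ltl_arith (bapp c \<phi> \<psi>) = barith c (ltl_arith \<phi>) (rebind 2 (ltl_arith \<psi>))"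
  by (cases c) simp_all

section \<open>Coding traces and teams\<close>

definition code_trace :: "trace \<Rightarrow> nat list set" where
  "code_trace t = {[i, p] | i p. p \<in> t i}"

definition decode_trace :: "nat list set \<Rightarrow> trace" where
  "decode_trace A = (\<lambda>i. {p. [i, p] \<in> A})"

definition code_team :: "trace set \<Rightarrow> nat list set list set" where
  "code_team T = {[code_trace t] | t. t \<in> T}"

definition decode_team :: "nat list set list set \<Rightarrow> trace set" where
  "decode_team X = {decode_trace A | A. [A] \<in> X}"

lemma decode_code_trace[simp]: "decode_trace (code_trace t) = t"
  by (auto simp: decode_trace_def code_trace_def)

lemma code_trace_in_dom2[simp]: "code_trace t \<in> dom2 2"
  by (auto simp: dom2_def code_trace_def)

lemma code_decode_trace: "A \<in> dom2 2 \<Longrightarrow> code_trace (decode_trace A) = A"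
  by (fastforce simp: dom2_def code_trace_def decode_trace_def numeral_2_eq_2 length_Suc_conv)

lemma code_trace_eq_iff[simp]: "code_trace t = code_trace u \<longleftrightarrow> t = u"
  by (metis decode_code_trace)

lemma mem_code_trace[simp]: "[i, p] \<in> code_trace t \<longleftrightarrow> p \<in> t i"
  by (auto simp: code_trace_def)

lemma code_team_in_dom3[simp]: "code_team T \<in> dom3 [2]"
  by (auto simp: dom3_def code_team_def)

lemma mem_code_team[simp]: "[code_trace t] \<in> code_team T \<longleftrightarrow> t \<in> T"
  by (auto simp: code_team_def)

lemma code_decode_team: "X \<in> dom3 [2] \<Longrightarrow> code_team (decode_team X) = X"
proof
  assume X: "X \<in> dom3 [2]"
  have singleton: "As \<in> X \<Longrightarrow> \<exists>A. As = [A] \<and> A \<in> dom2 2" for As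
    using X by (auto simp: dom3_def length_Suc_conv)
  show "code_team (decode_team X) \<subseteq> X"
    using singleton by (auto simp: code_team_def decode_team_def) (metis code_decode_trace list.inject)
  show "X \<subseteq> code_team (decode_team X)"
  proof
    fix As assume "As \<in> X"
    with singleton obtain A where "As = [A]" "A \<in> dom2 2" by blast
    then show "As \<in> code_team (decode_team X)"
      using \<open>As \<in> X\<close> unfolding code_team_def decode_team_def
      by (auto intro!: exI[of _ "decode_trace A"] simp: code_decode_trace)
  qed
qed

lemma ball_dom2_2: "(\<forall>A\<in>dom2 2. P A) \<longleftrightarrow> (\<forall>t. P (code_trace t))"
  by (metis code_trace_in_dom2 code_decode_trace)

lemma bex_dom2_2: "(\<exists>A\<in>dom2 2. P A) \<longleftrightarrow> (\<exists>t. P (code_trace t))"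
  by (metis code_trace_in_dom2 code_decode_trace)

lemma bex_dom3_team: "(\<exists>X\<in>dom3 [2]. P X) \<longleftrightarrow> (\<exists>T. P (code_team T))"
  by (metis code_team_in_dom3 code_decode_team)

lemma evalt_cong: "(\<And>x. x \<in> tfv t \<Longrightarrow> v1 \<sigma> x = v1 \<sigma>' x) \<Longrightarrow> evalt \<sigma> t = evalt \<sigma>' t"
  by (induction t) auto

lemma evalt_update_v2[simp]: "evalt (\<sigma>\<lparr>v2 := f\<rparr>) t = evalt \<sigma> t"
  by (rule evalt_cong) simp

lemma evalt_update_v3[simp]: "evalt (\<sigma>\<lparr>v3 := f\<rparr>) t = evalt \<sigma> t"
  by (rule evalt_cong) simp

lemma evalt_update_v1_other[simp]: "x \<notin> tfv t \<Longrightarrow> evalt (\<sigma>\<lparr>v1 := (v1 \<sigma>)(x := k)\<rparr>) t = evalt \<sigma> t"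
  by (rule evalt_cong) auto

lemma asat_in_team[simp]: "asat \<sigma> (in_team a X) \<longleftrightarrow> [v2 \<sigma> X 2] \<in> v3 \<sigma> a [2]"
  by (simp add: in_team_def)

lemma asat_aimp[simp]: "asat \<sigma> (aimp a b) \<longleftrightarrow> (asat \<sigma> a \<longrightarrow> asat \<sigma> b)"
  by (simp add: aimp_def)

lemma asat_aiff[simp]: "asat \<sigma> (aiff a b) \<longleftrightarrow> (asat \<sigma> a \<longleftrightarrow> asat \<sigma> b)"
  by (auto simp: aiff_def)

lemma asat_team_eq:
  assumes "v3 \<sigma> a [2] = code_team S" "v3 \<sigma> b [2] = code_team U"
  shows "asat \<sigma> (team_eq a b) \<longleftrightarrow> S = U"
  using assms by (auto simp: team_eq_def ball_dom2_2)

lemma asat_team_union: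
  assumes "v3 \<sigma> a [2] = code_team S" "v3 \<sigma> b [2] = code_team U" "v3 \<sigma> c [2] = code_team V"
  shows "asat \<sigma> (team_union a b c) \<longleftrightarrow> S = U \<union> V"
  using assms by (auto simp: team_union_def ball_dom2_2)

lemma asat_shifted:
  assumes "2 \<notin> tfv t" "3 \<notin> tfv t"
  shows "asat \<sigma> (shifted X Y t) \<longleftrightarrow>
    (\<forall>i p. [i, p] \<in> v2 \<sigma> X 2 \<longleftrightarrow> [i + evalt \<sigma> t, p] \<in> v2 \<sigma> Y 2)"
proof -
  have "evalt (\<sigma>\<lparr>v1 := (v1 \<sigma>)(2 := k, 3 := k')\<rparr>) t = evalt \<sigma> t" for k k'
    by (rule evalt_cong) (use assms in auto)
  then show ?thesis by (simp add: shifted_def)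
qed

lemma eq_suffix_iff: "(\<forall>i p. p \<in> t i \<longleftrightarrow> p \<in> u (i + k)) \<longleftrightarrow> t = suffix k u"
  by (auto simp: suffix_def add.commute fun_eq_iff)

lemma asat_team_suffix:
  assumes "v3 \<sigma> a [2] = code_team S" "v3 \<sigma> b [2] = code_team U" "2 \<notin> tfv t" "3 \<notin> tfv t"
  shows "asat \<sigma> (team_suffix a b t) \<longleftrightarrow> S = tsuffix (evalt \<sigma> t) U"
proof -
  have "asat \<sigma> (team_suffix a b t) \<longleftrightarrow> (\<forall>t'. t' \<in> S \<longleftrightarrow> (\<exists>u. u \<in> U \<and> t' = suffix (evalt \<sigma> t) u))"
    using assms by (simp add: team_suffix_def ball_dom2_2 bex_dom2_2 asat_shifted eq_suffix_iff)
  also have "\<dots> \<longleftrightarrow> S = tsuffix (evalt \<sigma> t) U"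
    by (auto simp: tsuffix_def)
  finally show ?thesis .
qed

lemma asat_team_singleton:
  assumes "v3 \<sigma> a [2] = code_team S" "v2 \<sigma> X 2 = code_trace t" "X \<noteq> 1"
  shows "asat \<sigma> (team_singleton a X) \<longleftrightarrow> S = {t}"
proof -
  have "asat \<sigma> (team_singleton a X) \<longleftrightarrow> (\<forall>u. u \<in> S \<longleftrightarrow> u = t)"
    using assms by (simp add: team_singleton_def ball_dom2_2 asat_shifted) (simp add: fun_eq_iff set_eq_iff)
  then show ?thesis by auto
qed

lemma asat_rebind:
  assumes "v3 \<sigma> k [2] = code_team S" "k \<noteq> 0"
  shows "asat \<sigma> (rebind k a) \<longleftrightarrow> asat (\<sigma>\<lparr>v3 := (v3 \<sigma>)(0 := (v3 \<sigma> 0)([2] := code_team S))\<rparr>) a"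
  using assms by (simp add: rebind_def bex_dom3_team asat_team_eq)

lemma asat_atom_bits:
  assumes "v3 \<sigma> 0 [2] = code_team T"
  shows "asat \<sigma> (atom_bits bs) \<longleftrightarrow> (\<forall>t\<in>T. bin_val_from (v1 \<sigma> 4) bs \<in> t 0)"
  using assms
proof (induction bs arbitrary: \<sigma>)
  case Nil
  then show ?case by (auto simp: atom_var_def ball_dom2_2 bin_val_from_def)
next
  case (Cons b bs)
  then show ?case by (simp add: bit_step_def bin_val_from_def mult_2)
qed

theorem asat_ltl_arith:
  "v3 \<sigma> 0 [2] = code_team T \<Longrightarrow> asat \<sigma> (ltl_arith \<phi>) \<longleftrightarrow> tsat T \<phi>"
proof (induction \<phi> arbitrary: \<sigma> T)
  case (Prop p)
  then show ?case by (simp add: asat_atom_bits)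
next
  case (Neg \<phi>)
  then show ?case by (simp add: ball_dom2_2 bex_dom3_team asat_team_singleton) blast
next
  case (Conj \<phi> \<psi>)
  then show ?case by (simp add: bex_dom3_team asat_team_eq asat_rebind)
next
  case (Disj \<phi> \<psi>)
  then show ?case by (simp add: bex_dom3_team asat_team_union asat_rebind)
next
  case (Next \<phi>)
  then show ?case by (simp add: bex_dom3_team asat_team_suffix asat_rebind)
next
  case (Fut \<phi>)
  then show ?case by (simp add: bex_dom3_team asat_team_suffix asat_rebind)
next
  case (Glob \<phi>)
  then show ?case by (simp add: bex_dom3_team asat_team_suffix asat_rebind)
next
  case (Until \<phi> \<psi>)
  then show ?case by (simp add: bex_dom3_team asat_team_suffix asat_rebind) (meson not_le)
next
  case (Rel \<phi> \<psi>)
  then show ?case by (simp add: bex_dom3_team asat_team_suffix asat_rebind not_le) blast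
next
  case (BNeg \<phi>)
  then show ?case by simp
qed

lemma fv_connectives[simp]:
  "fv1 (in_team a X) = {}" "fv2 (in_team a X) = {(X, 2)}" "fv3 (in_team a X) = {(a, [2])}"
  "fv1 (aimp x y) = fv1 x \<union> fv1 y" "fv2 (aimp x y) = fv2 x \<union> fv2 y" "fv3 (aimp x y) = fv3 x \<union> fv3 y"
  "fv1 (aiff x y) = fv1 x \<union> fv1 y" "fv2 (aiff x y) = fv2 x \<union> fv2 y" "fv3 (aiff x y) = fv3 x \<union> fv3 y"
  by (auto simp: in_team_def aimp_def aiff_def)

lemma fv_team_formulas[simp]:
  "fv1 (team_eq a b) = {}" "fv2 (team_eq a b) = {}" "fv3 (team_eq a b) = {(a, [2]), (b, [2])}"
  "fv1 (team_union a b c) = {}" "fv2 (team_union a b c) = {}"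
  "fv3 (team_union a b c) = {(a, [2]), (b, [2]), (c, [2])}"
  "fv1 (team_suffix a b t) = tfv t - {2, 3}" "fv2 (team_suffix a b t) = {}"
  "fv3 (team_suffix a b t) = {(a, [2]), (b, [2])}"
  "fv1 (team_singleton a X) = {}" "fv2 (team_singleton a X) = {(X, 2)} - {(1, 2)}"
  "fv3 (team_singleton a X) = {(a, [2])}"
  "fv1 atom_var = {4}" "fv2 atom_var = {}" "fv3 atom_var = {(0, [2])}"
  by (auto simp: team_eq_def team_union_def team_suffix_def shifted_def team_singleton_def atom_var_def)

lemma fv_atom_bits: "fv1 (atom_bits bs) \<subseteq> {4}" "fv2 (atom_bits bs) = {}" "fv3 (atom_bits bs) \<subseteq> {(0, [2])}"
  by (induction bs) (auto simp: bit_step_def)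

lemma fv_ltl_arith: "fv1 (ltl_arith \<phi>) = {}" "fv2 (ltl_arith \<phi>) = {}" "fv3 (ltl_arith \<phi>) \<subseteq> {(0, [2])}"
  using fv_atom_bits by (induction \<phi>) (auto simp: rebind_def)

section \<open>Teams of finite Kripke structures\<close>

definition path_rel :: "(nat \<times> nat) set \<Rightarrow> (nat \<times> nat) set \<Rightarrow> nat \<Rightarrow> trace \<Rightarrow> bool" where
  "path_rel R E r t \<longleftrightarrow> (\<exists>P. (0, r) \<in> P \<and> (\<forall>i. \<exists>w. (i, w) \<in> P) \<and>
     (\<forall>i w w'. (i, w) \<in> P \<and> (i, w') \<in> P \<longrightarrow> w = w') \<and>
     (\<forall>i w w'. (i, w) \<in> P \<and> (i + 1, w') \<in> P \<longrightarrow> (w, w') \<in> R) \<and>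
     (\<forall>i p. p \<in> t i \<longleftrightarrow> (\<exists>w. (i, w) \<in> P \<and> (w, p) \<in> E)))"

definition rel_kripke_team :: "trace set \<Rightarrow> bool" where
  "rel_kripke_team T \<longleftrightarrow> (\<exists>(W::nat set) (R::(nat \<times> nat) set) (E::(nat \<times> nat) set) r.
     r \<in> W \<and> (\<exists>n. \<forall>u. u \<in> W \<longrightarrow> u \<le> n) \<and>
     (\<forall>u w. (u, w) \<in> R \<longrightarrow> u \<in> W \<and> w \<in> W) \<and> (\<forall>u. u \<in> W \<longrightarrow> (\<exists>w. (u, w) \<in> R)) \<and>
     (\<exists>m. \<forall>u p. (u, p) \<in> E \<longrightarrow> p \<le> m) \<and>
     (\<forall>t. t \<in> T \<longleftrightarrow> path_rel R E r t))"

lemma path_rel_iff: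
  "path_rel R E r t \<longleftrightarrow>
     (\<exists>\<pi>. \<pi> 0 = r \<and> (\<forall>i. (\<pi> i, \<pi> (Suc i)) \<in> R) \<and> t = (\<lambda>i. {p. (\<pi> i, p) \<in> E}))"
proof
  assume "path_rel R E r t"
  then obtain P where P0: "(0, r) \<in> P" and total: "\<forall>i. \<exists>w. (i, w) \<in> P"
    and functional: "\<forall>i w w'. (i, w) \<in> P \<and> (i, w') \<in> P \<longrightarrow> w = w'"
    and step: "\<forall>i w w'. (i, w) \<in> P \<and> (i + 1, w') \<in> P \<longrightarrow> (w, w') \<in> R"
    and labels: "\<forall>i p. p \<in> t i \<longleftrightarrow> (\<exists>w. (i, w) \<in> P \<and> (w, p) \<in> E)"
    unfolding path_rel_def by blast
  define \<pi> where "\<pi> i = (SOME w. (i, w) \<in> P)" for i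
  have "(i, \<pi> i) \<in> P" for i
    using total unfolding \<pi>_def by (metis someI_ex)
  then have P_\<pi>: "(i, w) \<in> P \<longleftrightarrow> w = \<pi> i" for i w
    using functional by blast
  show "\<exists>\<pi>. \<pi> 0 = r \<and> (\<forall>i. (\<pi> i, \<pi> (Suc i)) \<in> R) \<and> t = (\<lambda>i. {p. (\<pi> i, p) \<in> E})"
    using P0 step labels by (intro exI[of _ \<pi>]) (auto simp: P_\<pi> fun_eq_iff)
next
  assume "\<exists>\<pi>. \<pi> 0 = r \<and> (\<forall>i. (\<pi> i, \<pi> (Suc i)) \<in> R) \<and> t = (\<lambda>i. {p. (\<pi> i, p) \<in> E})"
  then obtain \<pi> where "\<pi> 0 = r" "\<forall>i. (\<pi> i, \<pi> (Suc i)) \<in> R" "t = (\<lambda>i. {p. (\<pi> i, p) \<in> E})"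
    by blast
  then show "path_rel R E r t"
    unfolding path_rel_def by (intro exI[of _ "{(i, \<pi> i) | i. True}"]) auto
qed

lemma path_in_worlds:
  assumes "R \<subseteq> W \<times> W" "r \<in> W" "\<pi> 0 = r" "\<forall>i. (\<pi> i, \<pi> (Suc i)) \<in> R"
  shows "\<pi> i \<in> W"
  using assms by (cases i) auto

lemma rel_kripke_team_iff:
  "rel_kripke_team T \<longleftrightarrow> (\<exists>W R \<eta> r. finite_kripke W R \<eta> r \<and> T = kripke_team R \<eta> r)"
proof
  assume "rel_kripke_team T"
  then obtain W R E r n m where "r \<in> W" "\<forall>u. u \<in> W \<longrightarrow> u \<le> n"
    "\<forall>u w. (u, w) \<in> R \<longrightarrow> u \<in> W \<and> w \<in> W" "\<forall>u. u \<in> W \<longrightarrow> (\<exists>w. (u, w) \<in> R)"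
    and E_bounded: "\<forall>u p. (u, p) \<in> E \<longrightarrow> p \<le> m" and T: "\<forall>t. t \<in> T \<longleftrightarrow> path_rel R E r t"
    unfolding rel_kripke_team_def by blast
  moreover define \<eta> where "\<eta> w = {p. (w, p) \<in> E}" for w
  moreover have "finite (\<eta> w)" for w
    using E_bounded by (auto simp: \<eta>_def finite_nat_set_iff_bounded_le)
  ultimately have "finite_kripke W R \<eta> r"
    by (auto simp: finite_kripke_def finite_nat_set_iff_bounded_le)
  moreover have "T = kripke_team R \<eta> r"
    using T by (auto simp: kripke_team_def path_rel_iff \<eta>_def)
  ultimately show "\<exists>W R \<eta> r. finite_kripke W R \<eta> r \<and> T = kripke_team R \<eta> r"
    by blast
next
  assume "\<exists>W R \<eta> r. finite_kripke W R \<eta> r \<and> T = kripke_team R \<eta> r"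
  then obtain W R \<eta> r where W: "finite W" and R: "R \<subseteq> W \<times> W" and serial: "\<forall>w\<in>W. \<exists>v. (w, v) \<in> R"
    and \<eta>: "\<forall>w\<in>W. finite (\<eta> w)" and r: "r \<in> W" and T: "T = kripke_team R \<eta> r"
    unfolding finite_kripke_def by blast
  define E where "E = {(w, p). w \<in> W \<and> p \<in> \<eta> w}"
  have "\<exists>n. \<forall>u. u \<in> W \<longrightarrow> u \<le> n"
    using W by (auto simp: finite_nat_set_iff_bounded_le)
  moreover have "\<forall>u w. (u, w) \<in> R \<longrightarrow> u \<in> W \<and> w \<in> W" "\<forall>u. u \<in> W \<longrightarrow> (\<exists>w. (u, w) \<in> R)"
    using R serial by auto
  moreover obtain m where "\<forall>p\<in>(\<Union>w\<in>W. \<eta> w). p \<le> m"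
    using finite_UN_I[OF W, of \<eta>] \<eta> finite_nat_set_iff_bounded_le by blast
  then have "\<exists>m. \<forall>u p. (u, p) \<in> E \<longrightarrow> p \<le> m"
    by (auto simp: E_def)
  moreover have "\<forall>t. t \<in> T \<longleftrightarrow> path_rel R E r t"
    using path_in_worlds[OF R r] by (auto simp: T kripke_team_def path_rel_iff E_def fun_eq_iff)
  ultimately have "r \<in> W \<and> (\<exists>n. \<forall>u. u \<in> W \<longrightarrow> u \<le> n) \<and>
     (\<forall>u w. (u, w) \<in> R \<longrightarrow> u \<in> W \<and> w \<in> W) \<and> (\<forall>u. u \<in> W \<longrightarrow> (\<exists>w. (u, w) \<in> R)) \<and>
     (\<exists>m. \<forall>u p. (u, p) \<in> E \<longrightarrow> p \<le> m) \<and> (\<forall>t. t \<in> T \<longleftrightarrow> path_rel R E r t)"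
    using r by blast
  then show "rel_kripke_team T"
    unfolding rel_kripke_team_def by blast
qed

text \<open>Worlds and atomic propositions are numbers, so finiteness of the set of worlds (second-order
  variable 0 of arity 1) and of the labelling (variable 3, a relation between worlds and
  propositions) is expressed by upper bounds; first-order variable 8 is the root and variable 2
  the accessibility relation. A trace belongs to the team iff it is read off along a path, a total
  functional relation (variable 4) between time points and worlds.\<close>

definition kripke_team_formula :: aform where
  "kripke_team_formula = AEx2 0 1 (AEx2 2 2 (AEx2 3 2 (AEx1 8 (AAnd
     (AAnd (AMem2 0 1 [TVar 8])
     (AAnd (AEx1 6 (AAll1 9 (aimp (AMem2 0 1 [TVar 9]) (ALe (TVar 9) (TVar 6)))))
     (AAnd (AAll1 9 (AAll1 10 (aimp (AMem2 2 2 [TVar 9, TVar 10])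
        (AAnd (AMem2 0 1 [TVar 9]) (AMem2 0 1 [TVar 10])))))
     (AAnd (AAll1 9 (aimp (AMem2 0 1 [TVar 9]) (AEx1 10 (AMem2 2 2 [TVar 9, TVar 10]))))
           (AEx1 7 (AAll1 9 (AAll1 3 (aimp (AMem2 3 2 [TVar 9, TVar 3]) (ALe (TVar 3) (TVar 7))))))))))
     (AAll2 0 2 (aiff (in_team 0 0) (AEx2 4 2 (AAnd
        (AAnd (AMem2 4 2 [TZero, TVar 8])
        (AAnd (AAll1 2 (AEx1 10 (AMem2 4 2 [TVar 2, TVar 10])))
        (AAnd (AAll1 2 (AAll1 10 (AAll1 11 (aimp (AAnd (AMem2 4 2 [TVar 2, TVar 10]) (AMem2 4 2 [TVar 2, TVar 11]))
                                                (AEq (TVar 10) (TVar 11))))))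
              (AAll1 2 (AAll1 10 (AAll1 11 (aimp (AAnd (AMem2 4 2 [TVar 2, TVar 10])
                                                      (AMem2 4 2 [TPlus (TVar 2) TOne, TVar 11]))
                                                (AMem2 2 2 [TVar 10, TVar 11]))))))))
        (AAll1 2 (AAll1 3 (aiff (AMem2 0 2 [TVar 2, TVar 3])
          (AEx1 10 (AAnd (AMem2 4 2 [TVar 2, TVar 10]) (AMem2 3 2 [TVar 10, TVar 3]))))))))))))))"

lemma fv_kripke_team_formula:
  "fv1 kripke_team_formula = {}" "fv2 kripke_team_formula = {}" "fv3 kripke_team_formula = {(0, [2])}"
  by (auto simp: kripke_team_formula_def)

definition code_set :: "nat set \<Rightarrow> nat list set" where
  "code_set X = {[x] | x. x \<in> X}"

definition code_rel :: "(nat \<times> nat) set \<Rightarrow> nat list set" where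
  "code_rel Q = {[a, b] | a b. (a, b) \<in> Q}"

lemma code_set_in_dom2[simp]: "code_set X \<in> dom2 1"
  by (auto simp: code_set_def dom2_def)

lemma code_rel_in_dom2[simp]: "code_rel Q \<in> dom2 2"
  by (auto simp: code_rel_def dom2_def)

lemma mem_code_set[simp]: "[x] \<in> code_set X \<longleftrightarrow> x \<in> X"
  by (auto simp: code_set_def)

lemma mem_code_rel[simp]: "[a, b] \<in> code_rel Q \<longleftrightarrow> (a, b) \<in> Q"
  by (auto simp: code_rel_def)

lemma bex_dom2_1: "(\<exists>A\<in>dom2 (Suc 0). P A) \<longleftrightarrow> (\<exists>X. P (code_set X))"
proof
  assume "\<exists>A\<in>dom2 (Suc 0). P A"
  then obtain A where A: "A \<in> dom2 (Suc 0)" "P A" by blast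
  then have "A = code_set {x. [x] \<in> A}"
    by (auto simp: dom2_def code_set_def length_Suc_conv)
  with A show "\<exists>X. P (code_set X)" by metis
qed (use code_set_in_dom2 in force)

lemma bex_dom2_2_rel: "(\<exists>A\<in>dom2 2. P A) \<longleftrightarrow> (\<exists>Q. P (code_rel Q))"
proof
  assume "\<exists>A\<in>dom2 2. P A"
  then obtain A where A: "A \<in> dom2 2" "P A" by blast
  then have "A = code_rel {(x, y). [x, y] \<in> A}"
    by (auto simp: dom2_def code_rel_def length_Suc_conv numeral_2_eq_2)
  with A show "\<exists>Q. P (code_rel Q)" by metis
qed (use code_rel_in_dom2 in blast)

lemma asat_kripke_team_formula:
  "v3 \<sigma> 0 [2] = code_team T \<Longrightarrow> asat \<sigma> kripke_team_formula \<longleftrightarrow> rel_kripke_team T"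
  unfolding rel_kripke_team_def path_rel_def
  by (simp add: kripke_team_formula_def bex_dom2_1 bex_dom2_2_rel ball_dom2_2)

lemma ex_team_ltl_arith_in_Delta30_iff: "AEx3 0 [2] (ltl_arith \<phi>) \<in> Delta30 \<longleftrightarrow> \<phi> \<in> LTL_SAT"
proof -
  have "closed (AEx3 0 [2] (ltl_arith \<phi>))"
    using fv_ltl_arith[of \<phi>] by (auto simp: closed_def)
  then show ?thesis
    by (simp add: Delta30_def bex_dom3_team asat_ltl_arith LTL_SAT_def)
qed

lemma ex_kripke_team_ltl_arith_in_Delta30_iff:
  "AEx3 0 [2] (AAnd kripke_team_formula (ltl_arith \<phi>)) \<in> Delta30 \<longleftrightarrow> \<phi> \<in> LTL_FINSAT"
proof -
  have "closed (AEx3 0 [2] (AAnd kripke_team_formula (ltl_arith \<phi>)))"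
    using fv_ltl_arith[of \<phi>] fv_kripke_team_formula by (auto simp: closed_def)
  then have "AEx3 0 [2] (AAnd kripke_team_formula (ltl_arith \<phi>)) \<in> Delta30 \<longleftrightarrow>
      (\<exists>T. rel_kripke_team T \<and> tsat T \<phi>)"
    by (simp add: Delta30_def bex_dom3_team asat_ltl_arith asat_kripke_team_formula)
  also have "\<dots> \<longleftrightarrow> \<phi> \<in> LTL_FINSAT"
    unfolding rel_kripke_team_iff LTL_FINSAT_def by blast
  finally show ?thesis .
qed

section \<open>A finite-state transducer computing the translation\<close>

definition rebind_prefix :: "nat \<Rightarrow> bool list" where
  "rebind_prefix k = tok 13 @ num 0 @ enc_list num [2] @ tok 7 @ enc_aform (team_eq 0 k)"

lemma enc_rebind: "enc_aform (rebind k a) = rebind_prefix k @ enc_aform a"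
  by (simp add: rebind_def rebind_prefix_def)

definition arg_wrap :: "bool \<Rightarrow> aform \<Rightarrow> aform" where
  "arg_wrap snd_arg a = (if snd_arg then rebind 2 a else a)"

definition arg_prefix :: "bool \<Rightarrow> bool list" where
  "arg_prefix snd_arg = (if snd_arg then rebind_prefix 2 else [])"

lemma arg_wrap_False[simp]: "arg_wrap False a = a"
  by (simp add: arg_wrap_def)

lemma arg_prefix_False[simp]: "arg_prefix False = []"
  by (simp add: arg_prefix_def)

lemma enc_arg_wrap: "enc_aform (arg_wrap snd_arg a) = arg_prefix snd_arg @ enc_aform a"
  by (simp add: arg_wrap_def arg_prefix_def enc_rebind)

definition prop_block :: "bool list" where
  "prop_block = tok 9 @ num 4 @ tok 7 @ enc_aform (AEq (TVar 4) TZero)"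

definition digit_block :: "bool \<Rightarrow> bool list" where
  "digit_block b =
     tok 9 @ num 5 @ tok 7 @ enc_aform (bit_step b) @ tok 9 @ num 4 @ tok 7 @ enc_aform (AEq (TVar 4) (TVar 5))"

primrec ublock :: "uconn \<Rightarrow> bool list" where
  "ublock UNeg = tok 12 @ num 0 @ num 2 @ tok 8 @ tok 6 @ enc_aform (in_team 0 0) @
     tok 13 @ num 0 @ enc_list num [2] @ tok 7 @ enc_aform (team_singleton 0 0) @ tok 6"
| "ublock UNext = tok 13 @ num 1 @ enc_list num [2] @ tok 7 @ enc_aform (team_suffix 1 0 TOne) @ rebind_prefix 1"
| "ublock UFut = tok 9 @ num 0 @ tok 13 @ num 1 @ enc_list num [2] @ tok 7 @
     enc_aform (team_suffix 1 0 (TVar 0)) @ rebind_prefix 1"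
| "ublock UGlob = tok 10 @ num 0 @ tok 13 @ num 1 @ enc_list num [2] @ tok 7 @
     enc_aform (team_suffix 1 0 (TVar 0)) @ rebind_prefix 1"
| "ublock UBNeg = tok 6"

primrec bblock :: "bconn \<Rightarrow> bool list" where
  "bblock BConj = tok 13 @ num 2 @ enc_list num [2] @ tok 7 @ enc_aform (team_eq 2 0) @ tok 7"
| "bblock BDisj = tok 13 @ num 1 @ enc_list num [2] @ tok 13 @ num 2 @ enc_list num [2] @ tok 7 @
     enc_aform (team_union 0 1 2) @ tok 7 @ rebind_prefix 1"
| "bblock BUntil = tok 9 @ num 0 @ tok 13 @ num 2 @ enc_list num [2] @ tok 7 @
     enc_aform (team_suffix 2 0 (TVar 0)) @ tok 7 @ tok 10 @ num 1 @ tok 8 @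
     enc_aform (ALe (TVar 0) (TVar 1)) @ tok 13 @ num 1 @ enc_list num [2] @ tok 7 @
     enc_aform (team_suffix 1 0 (TVar 1)) @ rebind_prefix 1"
| "bblock BRel = tok 10 @ num 0 @ tok 13 @ num 2 @ enc_list num [2] @ tok 7 @
     enc_aform (team_suffix 2 0 (TVar 0)) @ tok 8 @ tok 9 @ num 1 @ tok 7 @ tok 6 @
     enc_aform (ALe (TVar 0) (TVar 1)) @ tok 13 @ num 1 @ enc_list num [2] @ tok 7 @
     enc_aform (team_suffix 1 0 (TVar 1)) @ rebind_prefix 1"

lemma enc_uarith: "enc_aform (uarith c a) = ublock c @ enc_aform a"
  by (cases c) (simp_all add: aimp_def enc_rebind)

lemma enc_barith: "enc_aform (barith c a b) = bblock c @ enc_aform a @ enc_aform b"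
  by (cases c) (simp_all add: enc_rebind)

primrec utok :: "uconn \<Rightarrow> nat" where
  "utok UNeg = 3" | "utok UNext = 6" | "utok UFut = 7" | "utok UGlob = 8" | "utok UBNeg = 11"

primrec btok :: "bconn \<Rightarrow> nat" where
  "btok BConj = 4" | "btok BDisj = 5" | "btok BUntil = 9" | "btok BRel = 10"

lemma enc_ltl_uapp: "enc_ltl (uapp c \<phi>) = tok (utok c) @ enc_ltl \<phi>"
  by (cases c) simp_all

lemma enc_ltl_bapp: "enc_ltl (bapp c \<phi> \<psi>) = tok (btok c) @ enc_ltl \<phi> @ enc_ltl \<psi>"
  by (cases c) simp_all

lemma ltl_conn_induct[case_names Prop uapp bapp]:
  assumes "\<And>p. P (Prop p)" "\<And>c \<phi>. P \<phi> \<Longrightarrow> P (uapp c \<phi>)"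
    "\<And>c \<phi> \<psi>. P \<phi> \<Longrightarrow> P \<psi> \<Longrightarrow> P (bapp c \<phi> \<psi>)"
  shows "P \<phi>"
  by (induction \<phi>) (metis assms uapp.simps bapp.simps)+

lemma utok_less: "utok c < 16"
  by (cases c) simp_all

lemma btok_less: "btok c < 16"
  by (cases c) simp_all

lemma inj_utok: "inj utok"
  by (rule injI) (case_tac x; case_tac y; simp)

lemma inj_btok: "inj btok"
  by (rule injI) (case_tac x; case_tac y; simp)

text \<open>In mode Formula the transducer expects the first token of a formula, whose encoding must be
  preceded by rebind_prefix 2 if it is a second argument. The other modes read the binary digits of
  an atomic proposition; AfterZero rejects leading zeros, so that the digits read are exactly those
  of a numeral, which makes the output parse back to the input.\<close>

datatype mode = Formula bool | FirstBit | AfterZero | MoreBits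

fun transducer_step :: "mode \<Rightarrow> nat \<Rightarrow> (bool list \<times> mode) option" where
  "transducer_step (Formula snd_arg) k =
     (if k = 2 then Some (arg_prefix snd_arg @ prop_block, FirstBit)
      else if k \<in> range utok then Some (arg_prefix snd_arg @ ublock (inv utok k), Formula False)
      else if k \<in> range btok then Some (arg_prefix snd_arg @ bblock (inv btok k), Formula False)
      else None)"
| "transducer_step FirstBit k =
     (if k \<le> 1 then Some (digit_block (k = 1), if k = 0 then AfterZero else MoreBits) else None)"
| "transducer_step AfterZero k = (if k = 15 then Some (enc_aform atom_var, Formula True) else None)"
| "transducer_step MoreBits k =
     (if k \<le> 1 then Some (digit_block (k = 1), MoreBits)
      else if k = 15 then Some (enc_aform atom_var, Formula True) else None)"

lemma transducer_step_utok:
  "transducer_step (Formula snd_arg) (utok c) = Some (arg_prefix snd_arg @ ublock c, Formula False)"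
proof -
  have "utok c \<noteq> 2" by (cases c) simp_all
  then show ?thesis by (simp add: inv_f_f[OF inj_utok])
qed

lemma transducer_step_btok:
  "transducer_step (Formula snd_arg) (btok c) = Some (arg_prefix snd_arg @ bblock c, Formula False)"
proof -
  have "btok c \<noteq> 2" "btok c \<notin> range utok"
    by (cases c; auto; case_tac x; simp)+
  then show ?thesis by (simp add: inv_f_f[OF inj_btok])
qed

lemma transducer_step_Prop:
  "transducer_step (Formula snd_arg) 2 = Some (arg_prefix snd_arg @ prop_block, FirstBit)"
  by simp

declare transducer_step.simps(1)[simp del]

text \<open>Token 15 terminates numerals, so no encoded formula starts with it: it serves as the error
  output on malformed input.\<close>

function transduce :: "mode \<Rightarrow> bool list \<Rightarrow> bool list" where
  "transduce m x =
     (if x = [] then [] else if length x < 4 then tok 15 else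
      (case transducer_step m (bin_val (take 4 x)) of
         None \<Rightarrow> tok 15
       | Some (h, m') \<Rightarrow> h @ transduce m' (drop 4 x)))"
  by auto
termination by (relation "measure (\<lambda>(m, x). length x)") auto

declare transduce.simps[simp del]

lemma transduce_Nil[simp]: "transduce m [] = []"
  by (simp add: transduce.simps)

lemma transduce_short: "x \<noteq> [] \<Longrightarrow> length x < 4 \<Longrightarrow> transduce m x = tok 15"
  by (simp add: transduce.simps)

lemma transduce_tok:
  "k < 16 \<Longrightarrow> transduce m (tok k @ x) =
     (case transducer_step m k of None \<Rightarrow> tok 15 | Some (h, m') \<Rightarrow> h @ transduce m' x)"
  by (subst transduce.simps) (simp add: bin_val_tok split: option.split)

lemma transduce_digits:
  "transduce MoreBits (concat (map (\<lambda>b. tok (of_bool b)) bs) @ tok 15 @ rest) =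
     enc_aform (atom_bits bs) @ transduce (Formula True) rest"
  by (induction bs) (simp_all add: transduce_tok digit_block_def)

lemma bin_cases: "bin p = [False] \<or> (\<exists>bs. bin p = True # bs)"
proof (induction p rule: bin.induct)
  case (1 n)
  show ?case
  proof (cases "n < 2")
    case True
    then show ?thesis by (subst (1 2) bin.simps) auto
  next
    case False
    then have "bin n = bin (n div 2) @ [odd n]" by (subst bin.simps) simp
    moreover have "bin (n div 2) \<noteq> [False]"
      using False bin_val_bin[of "n div 2"] by (auto simp: bin_val_from_def)
    ultimately show ?thesis using 1 False by (cases "bin (n div 2)") auto
  qed
qed

lemma transduce_num:
  "transduce FirstBit (num p @ rest) = enc_aform (atom_bits (bin p)) @ transduce (Formula True) rest"
  unfolding num_eq_digits[of p] using bin_cases[of p] transduce_digits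
  by (auto simp: transduce_tok digit_block_def)

theorem transduce_enc_ltl:
  "transduce (Formula snd_arg) (enc_ltl \<phi> @ rest) =
     enc_aform (arg_wrap snd_arg (ltl_arith \<phi>)) @ transduce (Formula True) rest"
proof (induction \<phi> arbitrary: snd_arg rest rule: ltl_conn_induct)
  case (Prop p)
  then show ?case
    by (simp add: transduce_tok transducer_step_Prop enc_arg_wrap prop_block_def transduce_num)
next
  case (uapp c \<phi>)
  then show ?case
    by (simp add: transduce_tok[OF utok_less] enc_ltl_uapp transducer_step_utok ltl_arith_uapp
        enc_arg_wrap enc_uarith)
next
  case (bapp c \<phi> \<psi>)
  then show ?case
    by (simp add: transduce_tok[OF btok_less] enc_ltl_bapp transducer_step_btok ltl_arith_bapp
        enc_arg_wrap enc_barith enc_rebind arg_prefix_def)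
qed

section \<open>Parsing the output of the transducer\<close>

lemma enc_aform_append_eq_tok:
  "enc_aform \<psi> @ r = tok 6 @ s \<longleftrightarrow> (\<exists>a. \<psi> = ANot a \<and> enc_aform a @ r = s)"
  "enc_aform \<psi> @ r = tok 7 @ s \<longleftrightarrow> (\<exists>a b. \<psi> = AAnd a b \<and> enc_aform a @ enc_aform b @ r = s)"
  "enc_aform \<psi> @ r = tok 8 @ s \<longleftrightarrow> (\<exists>a b. \<psi> = AOr a b \<and> enc_aform a @ enc_aform b @ r = s)"
  "enc_aform \<psi> @ r = tok 9 @ s \<longleftrightarrow> (\<exists>x a. \<psi> = AEx1 x a \<and> num x @ enc_aform a @ r = s)"
  "enc_aform \<psi> @ r = tok 10 @ s \<longleftrightarrow> (\<exists>x a. \<psi> = AAll1 x a \<and> num x @ enc_aform a @ r = s)"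
  "enc_aform \<psi> @ r = tok 12 @ s \<longleftrightarrow> (\<exists>X n a. \<psi> = AAll2 X n a \<and> num X @ num n @ enc_aform a @ r = s)"
  "enc_aform \<psi> @ r = tok 13 @ s \<longleftrightarrow>
     (\<exists>x ns a. \<psi> = AEx3 x ns a \<and> num x @ enc_list num ns @ enc_aform a @ r = s)"
  by (cases \<psi>; auto simp: tok_numerals)+

lemma enc_aform_append_neq_tok15: "enc_aform \<psi> @ r \<noteq> tok 15 @ s"
  by (cases \<psi>) (auto simp: tok_numerals)

lemma enc_aform_neq_Nil[simp]: "enc_aform \<psi> \<noteq> []"
  by (cases \<psi>) auto

lemma enc_aform_eq_rebind_prefix:
  "enc_aform \<psi> @ r = rebind_prefix k @ s \<Longrightarrow> \<exists>a. \<psi> = rebind k a \<and> enc_aform a @ r = s"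
  by (auto simp: rebind_prefix_def rebind_def enc_aform_append_eq_tok simp del: enc_aform.simps)

lemma enc_aform_eq_arg_prefix:
  "enc_aform \<psi> @ r = arg_prefix snd_arg @ s \<Longrightarrow> \<exists>a. \<psi> = arg_wrap snd_arg a \<and> enc_aform a @ r = s"
  using enc_aform_eq_rebind_prefix by (cases snd_arg) (auto simp: arg_prefix_def arg_wrap_def)

lemma enc_aform_eq_ublock:
  "enc_aform \<psi> @ r = ublock c @ s \<Longrightarrow> \<exists>a. \<psi> = uarith c a \<and> enc_aform a @ r = s"
  by (cases c) (auto simp: enc_aform_append_eq_tok rebind_prefix_def rebind_def aimp_def simp del: enc_aform.simps)

lemma enc_aform_eq_bblock:
  "enc_aform \<psi> @ r = bblock c @ s \<Longrightarrow> \<exists>a b. \<psi> = barith c a b \<and> enc_aform a @ enc_aform b @ r = s"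
  by (cases c) (auto simp: enc_aform_append_eq_tok rebind_prefix_def rebind_def simp del: enc_aform.simps)

lemma enc_aform_eq_prop_block:
  "enc_aform \<psi> @ r = prop_block @ s \<Longrightarrow>
     \<exists>a. \<psi> = AEx1 4 (AAnd (AEq (TVar 4) TZero) a) \<and> enc_aform a @ r = s"
  by (auto simp: prop_block_def enc_aform_append_eq_tok simp del: enc_aform.simps)

lemma enc_aform_eq_digit_block:
  "enc_aform \<psi> @ r = digit_block b @ s \<Longrightarrow>
     \<exists>a. \<psi> = AEx1 5 (AAnd (bit_step b) (AEx1 4 (AAnd (AEq (TVar 4) (TVar 5)) a))) \<and> enc_aform a @ r = s"
  by (auto simp: digit_block_def enc_aform_append_eq_tok simp del: enc_aform.simps)

lemma transducer_step_nonempty: "transducer_step m k = Some (h, m') \<Longrightarrow> h \<noteq> []"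
proof -
  have "ublock c \<noteq> []" "bblock d \<noteq> []" for c d
    by (cases c; simp) (cases d; simp)
  then show "transducer_step m k = Some (h, m') \<Longrightarrow> h \<noteq> []"
    by (cases m) (auto simp: transducer_step.simps(1) prop_block_def digit_block_def split: if_splits)
qed

lemma transduce_eq_enc_aform:
  assumes "transduce m x = enc_aform \<psi> @ r"
  obtains k rest h m' where "x = tok k @ rest" "transducer_step m k = Some (h, m')"
    "enc_aform \<psi> @ r = h @ transduce m' rest"
proof -
  have long: "4 \<le> length x"
  proof (rule ccontr)
    assume "\<not> 4 \<le> length x"
    moreover have "x \<noteq> []"
      using assms by auto
    ultimately show False
      using assms transduce_short enc_aform_append_neq_tok15[of \<psi> r "[]"] by auto
  qed
  define k where "k = bin_val (take 4 x)"
  have x: "x = tok k @ drop 4 x" and k: "k < 16"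
    using tok_bin_val[of "take 4 x"] long by (simp_all add: k_def)
  show thesis
  proof (cases "transducer_step m k")
    case None
    then show ?thesis
      using assms enc_aform_append_neq_tok15[of \<psi> r "[]"] transduce_tok[OF k, of m "drop 4 x"]
      by (simp flip: x)
  next
    case (Some hm)
    obtain h m' where "hm = (h, m')" by fastforce
    then show ?thesis
      using Some assms transduce_tok[OF k, of m "drop 4 x"] that[OF x, of h m'] by (simp flip: x)
  qed
qed

lemma bin_val_from_ge: "m \<le> bin_val_from m bs"
  by (induction bs rule: rev_induct) (auto simp: bin_val_from_def)

lemma bin_bin_val_True_Cons: "bin (bin_val (True # bs)) = True # bs"
proof (induction bs rule: rev_induct)
  case Nil
  then show ?case by (subst bin.simps) (simp add: bin_val_from_def)
next
  case (snoc b bs)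
  let ?v = "bin_val (True # bs)"
  have "1 \<le> ?v"
    using bin_val_from_ge[of 1 bs] by (simp add: bin_val_from_def)
  then have "bin (2 * ?v + of_bool b) = bin ?v @ [b]"
    by (subst bin.simps) auto
  then show ?case
    using snoc bin_val_from_snoc[of 0 "True # bs" b] by simp
qed

lemma transduce_MoreBits_eq_enc_aform:
  "transduce MoreBits x = enc_aform \<psi> @ r \<Longrightarrow>
     \<exists>bs x'. x = concat (map (\<lambda>b. tok (of_bool b)) bs) @ tok 15 @ x' \<and> \<psi> = atom_bits bs \<and>
       r = transduce (Formula True) x'"
proof (induction "length x" arbitrary: x \<psi> r rule: less_induct)
  case less
  obtain k rest h m' where x: "x = tok k @ rest" and step: "transducer_step MoreBits k = Some (h, m')"
    and out: "enc_aform \<psi> @ r = h @ transduce m' rest"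
    using transduce_eq_enc_aform[OF less.prems] .
  show ?case
  proof (cases "k \<le> 1")
    case True
    with step out obtain a where
      \<psi>: "\<psi> = AEx1 5 (AAnd (bit_step (k = 1)) (AEx1 4 (AAnd (AEq (TVar 4) (TVar 5)) a)))"
      and a: "transduce MoreBits rest = enc_aform a @ r"
      using enc_aform_eq_digit_block by fastforce
    obtain bs x' where "rest = concat (map (\<lambda>b. tok (of_bool b)) bs) @ tok 15 @ x'" "a = atom_bits bs"
      "r = transduce (Formula True) x'"
      using less.hyps[OF _ a] x by auto
    moreover have "tok k = tok (of_bool (k = 1))"
      using True by (cases "k = 1") (auto simp: le_Suc_eq)
    ultimately show ?thesis
      using x \<psi> by (intro exI[of _ "(k = 1) # bs"] exI[of _ x']) simp
  next
    case False
    with step out x show ?thesis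
      by (intro exI[of _ "[]"] exI[of _ rest]) (auto split: if_splits)
  qed
qed

lemma transduce_FirstBit_eq_enc_aform:
  assumes "transduce FirstBit x = enc_aform \<psi> @ r"
  shows "\<exists>p x'. x = num p @ x' \<and> \<psi> = atom_bits (bin p) \<and> r = transduce (Formula True) x'"
proof -
  obtain k rest h m' where x: "x = tok k @ rest" and step: "transducer_step FirstBit k = Some (h, m')"
    and out: "enc_aform \<psi> @ r = h @ transduce m' rest"
    using transduce_eq_enc_aform[OF assms] .
  from step have k: "k \<le> 1" and h: "h = digit_block (k = 1)"
    and m': "m' = (if k = 0 then AfterZero else MoreBits)"
    by (auto split: if_splits)
  from out h obtain a where
    \<psi>: "\<psi> = AEx1 5 (AAnd (bit_step (k = 1)) (AEx1 4 (AAnd (AEq (TVar 4) (TVar 5)) a)))"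
    and a: "transduce m' rest = enc_aform a @ r"
    using enc_aform_eq_digit_block by fastforce
  consider "k = 0" | "k = 1"
    using k by linarith
  then show ?thesis
  proof cases
    case 1
    from a m' 1 have "transduce AfterZero rest = enc_aform a @ r"
      by simp
    then obtain k' rest' h' m'' where "rest = tok k' @ rest'" "transducer_step AfterZero k' = Some (h', m'')"
      "enc_aform a @ r = h' @ transduce m'' rest'"
      by (rule transduce_eq_enc_aform)
    moreover have "bin 0 = [False]"
      by (subst bin.simps) simp
    ultimately show ?thesis
      using x \<psi> 1 by (intro exI[of _ 0] exI[of _ rest']) (auto simp: num_eq_digits split: if_splits)
  next
    case 2
    from a m' 2 have "transduce MoreBits rest = enc_aform a @ r"
      by simp
    then obtain bs x' where "rest = concat (map (\<lambda>b. tok (of_bool b)) bs) @ tok 15 @ x'" "a = atom_bits bs"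
      "r = transduce (Formula True) x'"
      using transduce_MoreBits_eq_enc_aform by blast
    then show ?thesis
      using x \<psi> 2 bin_bin_val_True_Cons[of bs]
      by (intro exI[of _ "bin_val (True # bs)"] exI[of _ x']) (simp add: num_eq_digits)
  qed
qed

lemma transducer_step_Formula_cases:
  assumes "transducer_step (Formula snd_arg) k = Some (h, m')"
  obtains "k = 2" "h = arg_prefix snd_arg @ prop_block" "m' = FirstBit"
  | c where "k = utok c" "h = arg_prefix snd_arg @ ublock c" "m' = Formula False"
  | c where "k = btok c" "h = arg_prefix snd_arg @ bblock c" "m' = Formula False"
  using assms by (auto simp: transducer_step.simps(1) inv_f_f inj_utok inj_btok split: if_splits)

theorem transduce_eq_enc_aform_imp_enc_ltl:
  "transduce (Formula snd_arg) x = enc_aform \<psi> @ r \<Longrightarrow>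
     \<exists>\<phi> x'. x = enc_ltl \<phi> @ x' \<and> \<psi> = arg_wrap snd_arg (ltl_arith \<phi>) \<and> r = transduce (Formula True) x'"
proof (induction "length x" arbitrary: x snd_arg \<psi> r rule: less_induct)
  case less
  obtain k rest h m' where x: "x = tok k @ rest" and step: "transducer_step (Formula snd_arg) k = Some (h, m')"
    and out: "enc_aform \<psi> @ r = h @ transduce m' rest"
    using transduce_eq_enc_aform[OF less.prems] .
  from step show ?case
  proof (cases rule: transducer_step_Formula_cases)
    case 1
    with out obtain a where \<psi>: "\<psi> = arg_wrap snd_arg (AEx1 4 (AAnd (AEq (TVar 4) TZero) a))"
      and a: "transduce FirstBit rest = enc_aform a @ r"
      using enc_aform_eq_arg_prefix enc_aform_eq_prop_block by (metis append.assoc)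
    from transduce_FirstBit_eq_enc_aform[OF a] obtain p x'
      where "rest = num p @ x'" "a = atom_bits (bin p)" "r = transduce (Formula True) x'"
      by blast
    then show ?thesis
      using x 1 \<psi> by (intro exI[of _ "Prop p"] exI[of _ x']) simp
  next
    case (2 c)
    with out obtain a where \<psi>: "\<psi> = arg_wrap snd_arg (uarith c a)"
      and a: "transduce (Formula False) rest = enc_aform a @ r"
      using enc_aform_eq_arg_prefix enc_aform_eq_ublock by (metis append.assoc)
    obtain \<phi> x' where "rest = enc_ltl \<phi> @ x'" "a = ltl_arith \<phi>" "r = transduce (Formula True) x'"
      using less.hyps[OF _ a] x by auto
    then show ?thesis
      using x 2 \<psi> by (intro exI[of _ "uapp c \<phi>"] exI[of _ x']) (simp add: enc_ltl_uapp ltl_arith_uapp)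
  next
    case (3 c)
    with out obtain a b where \<psi>: "\<psi> = arg_wrap snd_arg (barith c a b)"
      and ab: "transduce (Formula False) rest = enc_aform a @ enc_aform b @ r"
      using enc_aform_eq_arg_prefix enc_aform_eq_bblock by (metis append.assoc)
    obtain \<phi> x2 where rest: "rest = enc_ltl \<phi> @ x2" and a: "a = ltl_arith \<phi>"
      and b: "transduce (Formula True) x2 = enc_aform b @ r"
      using less.hyps[OF _ ab] x by fastforce
    obtain \<psi>' x' where "x2 = enc_ltl \<psi>' @ x'" "b = rebind 2 (ltl_arith \<psi>')" "r = transduce (Formula True) x'"
      using less.hyps[OF _ b] x rest by (auto simp: arg_wrap_def)
    then show ?thesis
      using x rest a \<psi> 3
      by (intro exI[of _ "bapp c \<phi> \<psi>'"] exI[of _ x']) (simp add: enc_ltl_bapp ltl_arith_bapp)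
  qed
qed

lemma transduce_eq_Nil_iff: "transduce m x = [] \<longleftrightarrow> x = []"
proof
  assume empty: "transduce m x = []"
  show "x = []"
  proof (rule ccontr)
    assume "x \<noteq> []"
    show False
    proof (cases "length x < 4")
      case True
      then show False using empty \<open>x \<noteq> []\<close> transduce_short by fastforce
    next
      case False
      then have "x = tok (bin_val (take 4 x)) @ drop 4 x" "bin_val (take 4 x) < 16"
        using tok_bin_val[of "take 4 x"] by simp_all
      then show False
        using empty transduce_tok[of "bin_val (take 4 x)" m "drop 4 x"] transducer_step_nonempty
        by (auto simp: tok_def split: option.splits)
    qed
  qed
qed simp

lemma reduction_by_transduce:
  assumes enc_G: "\<And>a. enc_aform (G a) = P @ enc_aform a"
    and parse_G: "\<And>\<psi> s. enc_aform \<psi> = P @ s \<Longrightarrow> \<exists>a. \<psi> = G a \<and> enc_aform a = s"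
    and G_Delta30: "\<And>\<phi>. G (ltl_arith \<phi>) \<in> Delta30 \<longleftrightarrow> \<phi> \<in> L"
  shows "x \<in> enc_ltl ` L \<longleftrightarrow> P @ transduce (Formula False) x \<in> enc_aform ` Delta30"
proof
  assume "x \<in> enc_ltl ` L"
  then obtain \<phi> where "x = enc_ltl \<phi>" "\<phi> \<in> L"
    by blast
  then have "P @ transduce (Formula False) x = enc_aform (G (ltl_arith \<phi>))" "G (ltl_arith \<phi>) \<in> Delta30"
    using transduce_enc_ltl[of False \<phi> "[]"] enc_G G_Delta30 by simp_all
  then show "P @ transduce (Formula False) x \<in> enc_aform ` Delta30"
    by (metis image_eqI)
next
  assume "P @ transduce (Formula False) x \<in> enc_aform ` Delta30"
  then obtain \<psi> where \<psi>: "\<psi> \<in> Delta30" "enc_aform \<psi> = P @ transduce (Formula False) x"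
    by auto
  then obtain a where a: "\<psi> = G a" "transduce (Formula False) x = enc_aform a @ []"
    using parse_G by force
  then obtain \<phi> x' where "x = enc_ltl \<phi> @ x'" "a = ltl_arith \<phi>" "transduce (Formula True) x' = []"
    using transduce_eq_enc_aform_imp_enc_ltl by (metis arg_wrap_False)
  then show "x \<in> enc_ltl ` L"
    using \<psi> a G_Delta30 by (simp add: transduce_eq_Nil_iff)
qed

lemma sat_reduction:
  "x \<in> enc_ltl ` LTL_SAT \<longleftrightarrow>
     (tok 13 @ num 0 @ enc_list num [2]) @ transduce (Formula False) x \<in> enc_aform ` Delta30"
proof (rule reduction_by_transduce[where G = "AEx3 0 [2]"])
  show "\<exists>a. \<psi> = AEx3 0 [2] a \<and> enc_aform a = s" if "enc_aform \<psi> = (tok 13 @ num 0 @ enc_list num [2]) @ s"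
    for \<psi> s
    using that by (auto simp: enc_aform_append_eq_tok[where r = "[]", simplified])
qed (simp_all add: ex_team_ltl_arith_in_Delta30_iff)

lemma finsat_reduction:
  "x \<in> enc_ltl ` LTL_FINSAT \<longleftrightarrow>
     (tok 13 @ num 0 @ enc_list num [2] @ tok 7 @ enc_aform kripke_team_formula) @
       transduce (Formula False) x \<in> enc_aform ` Delta30"
proof (rule reduction_by_transduce[where G = "\<lambda>a. AEx3 0 [2] (AAnd kripke_team_formula a)"])
  show "\<exists>a. \<psi> = AEx3 0 [2] (AAnd kripke_team_formula a) \<and> enc_aform a = s"
    if "enc_aform \<psi> = (tok 13 @ num 0 @ enc_list num [2] @ tok 7 @ enc_aform kripke_team_formula) @ s" for \<psi> s
    using that by (auto simp: enc_aform_append_eq_tok[where r = "[]", simplified])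
qed (simp_all add: ex_kripke_team_ltl_arith_in_Delta30_iff)

section \<open>Running the transducer on a Turing machine\<close>

primrec list_code :: "bool list \<Rightarrow> nat" where
  "list_code [] = 0"
| "list_code (b # bs) = 1 + of_bool b + 2 * list_code bs"

fun list_decode :: "nat \<Rightarrow> bool list" where
  "list_decode n = (if n = 0 then [] else odd (n - 1) # list_decode ((n - 1) div 2))"

declare list_decode.simps[simp del]

lemma list_decode_code[simp]: "list_decode (list_code bs) = bs"
  by (induction bs) (subst list_decode.simps; auto)+

lemma list_code_decode[simp]: "list_code (list_decode n) = n"
proof (induction n rule: list_decode.induct)
  case (1 n)
  then show ?case by (subst list_decode.simps) auto
qed

lemma list_code_less: "list_code bs < 2 ^ (length bs + 1)"
proof -
  have "list_code bs + 2 \<le> 2 ^ (length bs + 1)"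
    by (induction bs) auto
  then show ?thesis by linarith
qed

lemma list_code_less_mono: "length bs \<le> L \<Longrightarrow> list_code bs < 2 ^ (L + 1)"
  using list_code_less[of bs] power_increasing[of "length bs + 1" "L + 1" "2::nat"] by linarith

fun mode_code :: "mode \<Rightarrow> nat" where
  "mode_code (Formula False) = 0" | "mode_code (Formula True) = 1" | "mode_code FirstBit = 2"
| "mode_code AfterZero = 3" | "mode_code MoreBits = 4"

definition mode_decode :: "nat \<Rightarrow> mode" where
  "mode_decode n = (if n = 0 then Formula False else if n = 1 then Formula True
     else if n = 2 then FirstBit else if n = 3 then AfterZero else MoreBits)"

lemma mode_decode_code[simp]: "mode_decode (mode_code m) = m"
  by (cases m rule: mode_code.cases) (auto simp: mode_decode_def)

lemma mode_code_le: "mode_code m \<le> 4"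
  by (cases m rule: mode_code.cases) auto

text \<open>A state of the machine is a number c + 82 * list_code out with control state c < 82 and the
  output out still to be written, one bit per step. Control state 0 halts, 1 starts, and the
  remaining 16 * 5 control states read_state m buf are reading in mode m with the bits buf of the
  current token read so far.\<close>

definition read_state :: "mode \<Rightarrow> bool list \<Rightarrow> nat" where
  "read_state m buf = 2 + 16 * mode_code m + list_code buf"

lemma read_state_less: "length buf \<le> 3 \<Longrightarrow> read_state m buf < 82"
proof -
  assume "length buf \<le> 3"
  then have "list_code buf < 16"
    using list_code_less_mono[of buf 3] by simp
  then show ?thesis
    using mode_code_le[of m] unfolding read_state_def by linarith
qed

lemma read_state_decode:
  assumes "length buf \<le> 3"
  shows "mode_decode ((read_state m buf - 2) div 16) = m" "list_decode ((read_state m buf - 2) mod 16) = buf"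
proof -
  have "list_code buf < 16"
    using list_code_less_mono[OF assms] by simp
  then show "mode_decode ((read_state m buf - 2) div 16) = m" "list_decode ((read_state m buf - 2) mod 16) = buf"
    by (simp_all add: read_state_def)
qed

definition control :: "bool list \<Rightarrow> nat \<Rightarrow> bool option \<Rightarrow> nat \<times> int \<times> bool list" where
  "control P c a =
     (if c = 1 then (read_state (Formula False) [], 1, P)
      else if c < 2 then (0, 0, [])
      else
        let m = mode_decode ((c - 2) div 16); buf = list_decode ((c - 2) mod 16) in
        case a of
          None \<Rightarrow> (0, 0, if buf = [] then [] else tok 15)
        | Some b \<Rightarrow>
            if length buf < 3 then (read_state m (buf @ [b]), 1, [])
            else case transducer_step m (bin_val (buf @ [b])) of
              None \<Rightarrow> (0, 1, tok 15)
            | Some (h, m') \<Rightarrow> (read_state m' [], 1, h))"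

definition transducer_delta ::
  "bool list \<Rightarrow> nat \<Rightarrow> bool option \<Rightarrow> nat list \<Rightarrow> nat \<times> int \<times> (nat \<times> int) list \<times> bool option" where
  "transducer_delta P q a ss =
     (let c = q mod 82; out = list_decode (q div 82) in
      if out \<noteq> [] then (c + 82 * list_code (tl out), 0, [], Some (hd out))
      else case control P c a of (c', d, h) \<Rightarrow> (c' + 82 * list_code h, d, [], None))"

definition max_block :: nat where
  "max_block = length (rebind_prefix 2) + length prop_block + length (digit_block False) +
     length (digit_block True) + length (enc_aform atom_var) +
     (\<Sum>c\<in>{UNeg, UNext, UFut, UGlob, UBNeg}. length (ublock c)) +
     (\<Sum>c\<in>{BConj, BDisj, BUntil, BRel}. length (bblock c))"

lemma length_transducer_step: "transducer_step m k = Some (h, m') \<Longrightarrow> length h \<le> max_block"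
proof -
  have u: "length (ublock c) \<le> (\<Sum>c\<in>{UNeg, UNext, UFut, UGlob, UBNeg}. length (ublock c))" for c
    by (rule member_le_sum) (cases c; simp)+
  have b: "length (bblock c) \<le> (\<Sum>c\<in>{BConj, BDisj, BUntil, BRel}. length (bblock c))" for c
    by (rule member_le_sum) (cases c; simp)+
  have d: "length (digit_block b) \<le> length (digit_block False) + length (digit_block True)" for b
    by (cases b) simp_all
  show "transducer_step m k = Some (h, m') \<Longrightarrow> length h \<le> max_block"
    using u[of "inv utok k"] b[of "inv btok k"] d[of "k = 1"]
    by (cases m) (auto simp: transducer_step.simps(1) max_block_def arg_prefix_def simp del: sum.insert
      split: if_splits)
qed

definition max_output :: "bool list \<Rightarrow> nat" where
  "max_output P = length P + max_block + 4"

lemma control_bound: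
  assumes "control P c a = (c', d, h)"
  shows "c' < 82 \<and> d \<in> {0, 1} \<and> length h \<le> max_output P"
  using assms length_transducer_step read_state_less
  by (fastforce simp: control_def Let_def max_output_def split: if_splits option.splits)

definition transducer_tm :: "bool list \<Rightarrow> tm" where
  "transducer_tm P = \<lparr>nstates = 82 * 2 ^ (max_output P + 1), nsyms = 1, ntapes = 0,
     delta = transducer_delta P, start = 1, halt = 0\<rparr>"

lemma state_code_less: "c < 82 \<Longrightarrow> length bs \<le> L \<Longrightarrow> c + 82 * list_code bs < 82 * 2 ^ (L + 1)"
  using list_code_less_mono[of bs L] by linarith

lemma transducer_delta_bound:
  assumes "q < 82 * 2 ^ (max_output P + 1)"
  shows "case transducer_delta P q a ss of (q', d, ws, ob) \<Rightarrow>
    q' < 82 * 2 ^ (max_output P + 1) \<and> d \<in> {-1, 0, 1} \<and> ws = []"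
proof (cases "list_decode (q div 82) = []")
  case True
  obtain c' d h where ctl: "control P (q mod 82) a = (c', d, h)"
    by (metis prod_cases3)
  then show ?thesis
    using True control_bound[OF ctl] state_code_less[of c' h "max_output P"]
    by (auto simp: transducer_delta_def Let_def)
next
  case False
  let ?out = "list_decode (q div 82)"
  have "list_code (tl ?out) < list_code ?out"
    using False by (cases ?out) auto
  then have "q mod 82 + 82 * list_code (tl ?out) < q"
    using div_mult_mod_eq[of q 82] by simp
  then show ?thesis
    using False assms by (simp add: transducer_delta_def Let_def)
qed

lemma wf_transducer_tm: "wf_tm (transducer_tm P)"
proof -
  have "q < 82 * 2 ^ (max_output P + 1) \<Longrightarrow> case transducer_delta P q a ss of (q', di, ws, ob) \<Rightarrow>
      q' < 82 * 2 ^ (max_output P + 1) \<and> di \<in> {-1, 0, 1} \<and> length ws = 0 \<and>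
      (\<forall>(s, d)\<in>set ws. s < 1 \<and> d \<in> {-1, 0, 1})" for q a ss
    using transducer_delta_bound[of q P a ss] by (auto split: prod.splits)
  moreover have "(1::nat) < 82 * 2 ^ (max_output P + 1)"
    using one_le_power[of "2::nat" "max_output P + 1"] by linarith
  ultimately show ?thesis
    unfolding wf_tm_def transducer_tm_def by auto
qed

definition conf_of :: "nat \<Rightarrow> nat \<Rightarrow> bool list \<Rightarrow> conf" where
  "conf_of q p out = \<lparr>st = q, ipos = p, wt = [], wpos = [], outp = out\<rparr>"

lemma init_conf_transducer_tm: "init_conf (transducer_tm P) = conf_of 1 0 []"
  by (simp add: init_conf_def conf_of_def transducer_tm_def)

lemma step_conf_of:
  "q \<noteq> 0 \<Longrightarrow> step (transducer_tm P) x (conf_of q p out) =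
     (case transducer_delta P q (inp_sym x p) [] of (q', d, ws, ob) \<Rightarrow>
        conf_of q' (min (length x + 1) (nat (int p + d))) (out @ (case ob of None \<Rightarrow> [] | Some b \<Rightarrow> [b])))"
  by (simp add: step_def conf_of_def transducer_tm_def split: prod.split)

lemma step_control:
  assumes "c < 82" "c \<noteq> 0"
  shows "step (transducer_tm P) x (conf_of c p out) =
    (case control P c (inp_sym x p) of (c', d, h) \<Rightarrow>
       conf_of (c' + 82 * list_code h) (min (length x + 1) (nat (int p + d))) out)"
proof -
  have "list_decode 0 = []"
    by (simp add: list_decode.simps)
  then show ?thesis
    using assms by (simp add: step_conf_of transducer_delta_def split: prod.split)
qed

lemma steps_emit:
  assumes "c < 82" "p \<le> length x + 1"
  shows "(step (transducer_tm P) x ^^ length bs) (conf_of (c + 82 * list_code bs) p out) = conf_of c p (out @ bs)"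
proof (induction bs arbitrary: out)
  case (Cons b bs)
  have "step (transducer_tm P) x (conf_of (c + 82 * list_code (b # bs)) p out) =
      conf_of (c + 82 * list_code bs) p (out @ [b])"
  proof -
    have q: "c + 82 * list_code (b # bs) \<noteq> 0"
      by simp
    have "(c + 82 * list_code (b # bs)) mod 82 = c" "(c + 82 * list_code (b # bs)) div 82 = list_code (b # bs)"
      using assms(1) by (simp_all del: list_code.simps)
    then show ?thesis
      using assms by (simp add: step_conf_of[OF q] transducer_delta_def del: list_code.simps)
  qed
  then show ?case
    using Cons by (simp add: funpow_Suc_right del: funpow.simps)
qed simp

lemma control_read_state:
  assumes "length buf \<le> 3"
  shows "control P (read_state m buf) a =
    (case a of
       None \<Rightarrow> (0, 0, if buf = [] then [] else tok 15)
     | Some b \<Rightarrow>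
         if length buf < 3 then (read_state m (buf @ [b]), 1, [])
         else case transducer_step m (bin_val (buf @ [b])) of
           None \<Rightarrow> (0, 1, tok 15)
         | Some (h, m') \<Rightarrow> (read_state m' [], 1, h))"
  using read_state_decode[OF assms, of m] by (simp add: control_def read_state_def)

lemma read_state_nonzero: "read_state m buf \<noteq> 0"
  by (simp add: read_state_def)

lemma drop_pred_eq_Cons:
  assumes "1 \<le> p" "drop (p - 1) x = b # r"
  shows "p \<le> length x" "inp_sym x p = Some b" "drop p x = r"
proof -
  have "drop (p - 1) x \<noteq> []"
    using assms(2) by simp
  then have "p - 1 < length x"
    by simp
  then show "p \<le> length x"
    using assms(1) by simp
  show "inp_sym x p = Some b"
    using \<open>p - 1 < length x\<close>
    using assms nth_via_drop[of "p - 1" x b] by (auto simp: inp_sym_def)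
  have "drop (Suc (p - 1)) x = tl (drop (p - 1) x)"
    by (simp add: drop_Suc tl_drop)
  then show "drop p x = r"
    using assms by simp
qed

lemma step_read_bit:
  assumes "length buf \<le> 3" "1 \<le> p" "drop (p - 1) x = b # r"
  shows "step (transducer_tm P) x (conf_of (read_state m buf) p out) =
    (if length buf < 3 then conf_of (read_state m (buf @ [b])) (p + 1) out
     else conf_of (case transducer_step m (bin_val (buf @ [b])) of
                     None \<Rightarrow> 82 * list_code (tok 15)
                   | Some (h, m') \<Rightarrow> read_state m' [] + 82 * list_code h) (p + 1) out)"
  using drop_pred_eq_Cons[OF assms(2,3)]
  by (auto simp: step_control[OF read_state_less[OF assms(1)] read_state_nonzero]
        control_read_state[OF assms(1)] nat_add_distrib split: option.split)

lemma steps_read: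
  assumes "length buf + length bs \<le> 3" "1 \<le> p" "drop (p - 1) x = bs @ r"
  shows "(step (transducer_tm P) x ^^ length bs) (conf_of (read_state m buf) p out) =
    conf_of (read_state m (buf @ bs)) (p + length bs) out"
  using assms
proof (induction bs arbitrary: buf p)
  case (Cons b bs)
  then have "step (transducer_tm P) x (conf_of (read_state m buf) p out) =
      conf_of (read_state m (buf @ [b])) (Suc p) out"
    using step_read_bit[of buf p x b "bs @ r"] by simp
  then show ?case
    using Cons.IH[of "buf @ [b]" "Suc p"] Cons.prems drop_pred_eq_Cons(3)[of p x b "bs @ r"]
    by (simp add: funpow_Suc_right del: funpow.simps)
qed simp

lemma steps_token:
  assumes "1 \<le> p" "drop (p - 1) x = tok k @ r" "k < 16"
  shows "(step (transducer_tm P) x ^^ 4) (conf_of (read_state m []) p out) =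
    conf_of (case transducer_step m k of
               None \<Rightarrow> 82 * list_code (tok 15)
             | Some (h, m') \<Rightarrow> read_state m' [] + 82 * list_code h) (p + 4) out"
proof -
  obtain b0 b1 b2 b3 where tk: "tok k = [b0, b1, b2, b3]"
    by (simp add: tok_def)
  have three: "(step (transducer_tm P) x ^^ 3) (conf_of (read_state m []) p out) =
      conf_of (read_state m [b0, b1, b2]) (p + 3) out"
    using steps_read[of "[]" "[b0, b1, b2]" p x "b3 # r" P m out] assms tk by (simp add: numeral_3_eq_3)
  have "drop (p + 3 - 1) x = drop 3 (drop (p - 1) x)"
    using assms(1) by (simp add: add.commute)
  also have "\<dots> = b3 # r"
    unfolding assms(2) tk by simp
  finally show ?thesis
    using three step_read_bit[of "[b0, b1, b2]" "p + 3" x b3 r P m out] bin_val_tok[OF assms(3)] tk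
    by (simp add: numeral_eq_Suc del: funpow.simps) (simp add: numeral_3_eq_3)
qed

lemma step_read_end:
  assumes "length buf \<le> 3"
  shows "step (transducer_tm P) x (conf_of (read_state m buf) (length x + 1) out) =
    conf_of (if buf = [] then 0 else 82 * list_code (tok 15)) (length x + 1) out"
  by (simp add: step_control[OF read_state_less[OF assms] read_state_nonzero]
      control_read_state[OF assms] inp_sym_def)

lemma steps_short_input:
  assumes "1 \<le> p" "drop (p - 1) x = r" "r \<noteq> []" "length r < 4"
  shows "(step (transducer_tm P) x ^^ (length (tok 15) + (1 + length r))) (conf_of (read_state m []) p out) =
    conf_of 0 (length x + 1) (out @ tok 15)"
proof -
  have "(step (transducer_tm P) x ^^ length r) (conf_of (read_state m []) p out) =
      conf_of (read_state m r) (length x + 1) out"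
    using steps_read[of "[]" r p x "[]"] assms by auto
  moreover have "step (transducer_tm P) x (conf_of (read_state m r) (length x + 1) out) =
      conf_of (0 + 82 * list_code (tok 15)) (length x + 1) out"
    using step_read_end[of r] assms by simp
  moreover have "(step (transducer_tm P) x ^^ length (tok 15))
      (conf_of (0 + 82 * list_code (tok 15)) (length x + 1) out) = conf_of 0 (length x + 1) (out @ tok 15)"
    by (rule steps_emit) simp_all
  ultimately show ?thesis
    by (simp only: funpow_add comp_apply) simp
qed

lemma steps_token_emit:
  assumes "1 \<le> p" "drop (p - 1) x = tok k @ r" "k < 16"
  shows "transducer_step m k = None \<Longrightarrow>
      (step (transducer_tm P) x ^^ (length (tok 15) + 4)) (conf_of (read_state m []) p out) =
      conf_of 0 (p + 4) (out @ tok 15)"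
    and "transducer_step m k = Some (h, m') \<Longrightarrow>
      (step (transducer_tm P) x ^^ (length h + 4)) (conf_of (read_state m []) p out) =
      conf_of (read_state m' []) (p + 4) (out @ h)"
proof -
  have "length x - (p - 1) = 4 + length r"
    using arg_cong[OF assms(2), of length] by simp
  then have p4: "p + 4 \<le> length x + 1"
    using assms(1) by linarith
  note token = steps_token[OF assms, of P m out]
  show "transducer_step m k = None \<Longrightarrow>
      (step (transducer_tm P) x ^^ (length (tok 15) + 4)) (conf_of (read_state m []) p out) =
      conf_of 0 (p + 4) (out @ tok 15)"
    using token steps_emit[where c = 0 and bs = "tok 15"] p4 by (simp only: funpow_add comp_apply) simp
  show "transducer_step m k = Some (h, m') \<Longrightarrow>
      (step (transducer_tm P) x ^^ (length h + 4)) (conf_of (read_state m []) p out) =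
      conf_of (read_state m' []) (p + 4) (out @ h)"
    using token steps_emit[where c = "read_state m' []" and bs = h] p4 read_state_less[of "[]" m']
    by (simp only: funpow_add comp_apply) simp
qed

lemma steps_transduce:
  assumes "1 \<le> p" "p \<le> length x + 1"
  shows "\<exists>n p'. (step (transducer_tm P) x ^^ n) (conf_of (read_state m []) p out) =
    conf_of 0 p' (out @ transduce m (drop (p - 1) x))"
  using assms
proof (induction "length x + 1 - p" arbitrary: p m out rule: less_induct)
  case less
  define r where "r = drop (p - 1) x"
  consider "r = []" | "r \<noteq> []" "length r < 4" | "4 \<le> length r"
    by linarith
  then show ?case
  proof cases
    case 1
    then have "p = length x + 1"
      using less.prems by (simp add: r_def)
    then have "(step (transducer_tm P) x ^^ 1) (conf_of (read_state m []) p out) = conf_of 0 p out"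
      using step_read_end[of "[]"] by simp
    then show ?thesis
      using 1 by (metis r_def append_Nil2 transduce_Nil)
  next
    case 2
    then show ?thesis
      using steps_short_input[OF less.prems(1) r_def[symmetric]] transduce_short[of r m] by (metis r_def)
  next
    case 3
    define k where "k = bin_val (take 4 r)"
    have r_eq: "r = tok k @ drop 4 r" and k: "k < 16"
      using tok_bin_val[of "take 4 r"] 3 by (simp_all add: k_def)
    have r: "drop (p - 1) x = tok k @ drop 4 r"
      unfolding r_def[symmetric] by (fact r_eq)
    show ?thesis
    proof (cases "transducer_step m k")
      case None
      then show ?thesis
        using steps_token_emit(1)[OF less.prems(1) r k] transduce_tok[OF k, of m "drop 4 r"] r
        unfolding r_def by (metis option.simps(4))
    next
      case (Some hm)
      obtain h m' where hm: "hm = (h, m')"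
        by fastforce
      have "drop (p + 4 - 1) x = drop 4 r"
        using less.prems(1) by (simp add: r_def add.commute)
      moreover have "length x + 1 - (p + 4) < length x + 1 - p" "p + 4 \<le> length x + 1"
        using 3 less.prems by (simp_all add: r_def)
      ultimately obtain n p' where "(step (transducer_tm P) x ^^ n) (conf_of (read_state m' []) (p + 4) (out @ h)) =
          conf_of 0 p' ((out @ h) @ transduce m' (drop 4 r))"
        using less.hyps[of "p + 4" m' "out @ h"] by auto
      then have "(step (transducer_tm P) x ^^ (n + (length h + 4))) (conf_of (read_state m []) p out) =
          conf_of 0 p' (out @ h @ transduce m' (drop 4 r))"
        using steps_token_emit(2)[OF less.prems(1) r k] Some hm by (simp only: funpow_add comp_apply) simp
      moreover have "transduce m (drop (p - 1) x) = h @ transduce m' (drop 4 r)"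
        using transduce_tok[OF k, of m "drop 4 r"] Some hm r by simp
      ultimately show ?thesis
        by metis
    qed
  qed
qed

lemma run_transducer_tm:
  "\<exists>n. st (run (transducer_tm P) x n) = halt (transducer_tm P) \<and>
     outp (run (transducer_tm P) x n) = P @ transduce (Formula False) x"
proof -
  have "control P 1 (inp_sym x 0) = (read_state (Formula False) [], 1, P)"
    by (simp add: control_def)
  then have "(step (transducer_tm P) x ^^ 1) (conf_of 1 0 []) =
      conf_of (read_state (Formula False) [] + 82 * list_code P) 1 []"
    by (simp add: step_control)
  moreover have "(step (transducer_tm P) x ^^ length P)
      (conf_of (read_state (Formula False) [] + 82 * list_code P) 1 []) = conf_of (read_state (Formula False) []) 1 P"
    using steps_emit[where c = "read_state (Formula False) []" and bs = P] read_state_less by simp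
  moreover obtain n p' where "(step (transducer_tm P) x ^^ n) (conf_of (read_state (Formula False) []) 1 P) =
      conf_of 0 p' (P @ transduce (Formula False) x)"
    using steps_transduce[of 1 x P "Formula False" P] by auto
  ultimately have "run (transducer_tm P) x (n + (length P + 1)) = conf_of 0 p' (P @ transduce (Formula False) x)"
    unfolding run_def init_conf_transducer_tm by (simp only: funpow_add comp_apply)
  then show ?thesis
    by (intro exI[of _ "n + (length P + 1)"]) (simp add: conf_of_def transducer_tm_def)
qed

lemma wpos_run_transducer_tm: "wpos (run (transducer_tm P) x n) = []"
proof (induction n)
  case 0
  then show ?case by (simp add: run_def init_conf_def transducer_tm_def)
next
  case (Suc n)
  then show ?case by (simp add: run_def step_def split: prod.split)
qed

lemma logspace_transducer_tm: "logspace_computes (transducer_tm P) (\<lambda>x. P @ transduce (Formula False) x)"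
  unfolding logspace_computes_def using run_transducer_tm wpos_run_transducer_tm by auto

theorem mainTheorem10:
  shows "logspace_reducible (enc_ltl ` LTL_SAT) (enc_aform ` Delta30) \<and>
         logspace_reducible (enc_ltl ` LTL_FINSAT) (enc_aform ` Delta30)"
  unfolding logspace_reducible_def
  using wf_transducer_tm logspace_transducer_tm sat_reduction finsat_reduction by blast

end
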